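(* For every integer $n$ with $1\le n \leq 5$, the quotient $\mathbb{Z}[\operatorname{SL}_2(\mathbb{Z})]/((u-1)^n)$ of the group ring by the two-sided ideal generated by $(u-1)^n$ is a finitely generated $\mathbb{Z}$-module.
   Context: $u = \begin{pmatrix}1 & 1 \\ 0 & 1\end{pmatrix}\in\operatorname{SL}_2(\mathbb{Z})$, and $\mathbb{Z}[\operatorname{SL}_2(\mathbb{Z})]$ is the integral group ring of the abstract group $\operatorname{SL}_2(\mathbb{Z})$. *)

theory Defs
  imports Main "HOL-Library.Poly_Mapping"
begin

text \<open>A matrix (a b; c d) is stored as the tuple (a,b,c,d).\<close>
typedef sl2z = "{(a, b, c, d). (a :: int) * d - b * c = 1}"
  morphisms sl2z_entries Abs_sl2z
  by (rule exI[of _ "(1, 0, 0, 1)"]) simp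

setup_lifting type_definition_sl2z

lift_definition sl2z_one :: sl2z is "(1, 0, 0, 1)" by simp

lift_definition sl2z_mult :: "sl2z \<Rightarrow> sl2z \<Rightarrow> sl2z" is
  "\<lambda>(a, b, c, d) (a', b', c', d').
     (a * a' + b * c', a * b' + b * d', c * a' + d * c', c * b' + d * d')"
proof (clarsimp split: prod.splits)
  fix a b c d a' b' c' d' :: int
  assume "a * d - b * c = 1" "a' * d' - b' * c' = 1"
  moreover have "(a * a' + b * c') * (c * b' + d * d') - (a * b' + b * d') * (c * a' + d * c')
      = (a * d - b * c) * (a' * d' - b' * c')" by (simp add: algebra_simps)
  ultimately show "(a * a' + b * c') * (c * b' + d * d') - (a * b' + b * d') * (c * a' + d * c') = 1"
    by simp
qed

lift_definition sl2z_u :: sl2z is "(1, 1, 0, 1)" by simp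

type_synonym grz = "sl2z \<Rightarrow>\<^sub>0 int"

definition gr_mult :: "grz \<Rightarrow> grz \<Rightarrow> grz" where
  "gr_mult p q = (\<Sum>g\<in>Poly_Mapping.keys p. \<Sum>h\<in>Poly_Mapping.keys q.
       Poly_Mapping.single (sl2z_mult g h) (Poly_Mapping.lookup p g * Poly_Mapping.lookup q h))"

definition gr_one :: grz where
  "gr_one = Poly_Mapping.single sl2z_one 1"

definition gr_u :: grz where
  "gr_u = Poly_Mapping.single sl2z_u 1"

primrec gr_pow :: "grz \<Rightarrow> nat \<Rightarrow> grz" where
  "gr_pow x 0 = gr_one"
| "gr_pow x (Suc n) = gr_mult (gr_pow x n) x"

definition gr_smult :: "int \<Rightarrow> grz \<Rightarrow> grz" where
  "gr_smult k p = Poly_Mapping.map (\<lambda>v. k * v) p"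

inductive_set gen_ideal :: "grz \<Rightarrow> grz set" for w :: grz where
  gen: "w \<in> gen_ideal w"
| zero: "0 \<in> gen_ideal w"
| add: "x \<in> gen_ideal w \<Longrightarrow> y \<in> gen_ideal w \<Longrightarrow> x + y \<in> gen_ideal w"
| neg: "x \<in> gen_ideal w \<Longrightarrow> - x \<in> gen_ideal w"
| lmult: "x \<in> gen_ideal w \<Longrightarrow> gr_mult a x \<in> gen_ideal w"
| rmult: "x \<in> gen_ideal w \<Longrightarrow> gr_mult x a \<in> gen_ideal w"

text \<open>The quotient Z[G]/I is a finitely generated Z-module iff there is a finite
  set S of elements of Z[G] whose classes generate the quotient, i.e. every
  element is congruent modulo I to an integer combination of elements of S.\<close>
definition fg_quotient :: "grz set \<Rightarrow> bool" where
  "fg_quotient I \<longleftrightarrow> (\<exists>S. finite S \<and>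
      (\<forall>x. \<exists>c :: grz \<Rightarrow> int. x - (\<Sum>s\<in>S. gr_smult (c s) s) \<in> I))"

end

theory Submission
  imports Defs
begin

text \<open>The matrices \<open>s = (0 -1; 1 0)\<close> and \<open>u\<close> generate \<open>SL\<^sub>2(\<int>)\<close> as a monoid, since
  \<open>u\<^sup>-\<^sup>1 = s u s u s\<^sup>3\<close>. Modulo \<open>(u - 1)\<^sup>5\<close>, words in \<open>s\<close> and \<open>u\<close> can be rewritten with the group
  relations \<open>s\<^sup>4 = 1\<close> and \<open>u s u s u = s\<close> and with \<open>u\<^sup>5 = 5u\<^sup>4 - 10u\<^sup>3 + 10u\<^sup>2 - 5u + 1\<close>.
  Knuth-Bendix completion turns these into 23 rules, each obtained from earlier ones by
  resolving a critical pair, with exactly 126 irreducible words; so the quotient is spanned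
  by the images of 126 group elements. For \<open>n \<le> 5\<close> the ideal of \<open>(u - 1)\<^sup>n\<close> contains \<open>(u - 1)\<^sup>5\<close>, so its
  quotient is spanned by the same elements.\<close>

section \<open>\<open>SL\<^sub>2(\<int>)\<close> is generated by \<open>s\<close> and \<open>u\<close> as a monoid\<close>

lift_definition sl2z_s :: sl2z is "(0, -1, 1, 0)" by simp

lift_definition sl2z_upow :: "int \<Rightarrow> sl2z" is "\<lambda>k. (1, k, 0, 1)" by simp

lemma sl2z_eqI: "sl2z_entries g = sl2z_entries h \<Longrightarrow> g = h"
  by (simp add: sl2z_entries_inject)

lemma sl2z_mult_assoc: "sl2z_mult (sl2z_mult a b) c = sl2z_mult a (sl2z_mult b c)"
  by transfer (auto simp: algebra_simps split: prod.splits)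

lemma sl2z_mult_one_left [simp]: "sl2z_mult sl2z_one a = a"
  by transfer auto

lemma sl2z_mult_one_right [simp]: "sl2z_mult a sl2z_one = a"
  by transfer auto

lemma sl2z_mult_upow: "sl2z_mult (sl2z_upow a) (sl2z_upow b) = sl2z_upow (a + b)"
  by transfer simp

lemma sl2z_upow_0: "sl2z_upow 0 = sl2z_one"
  by transfer simp

lemma sl2z_u_eq_upow: "sl2z_u = sl2z_upow 1"
  by transfer simp

datatype letter = S | U

primrec letter_eval :: "letter \<Rightarrow> sl2z" where
  "letter_eval S = sl2z_s"
| "letter_eval U = sl2z_u"

type_synonym word = "letter list"

primrec word_eval :: "word \<Rightarrow> sl2z" where
  "word_eval [] = sl2z_one"
| "word_eval (x # w) = sl2z_mult (letter_eval x) (word_eval w)"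

lemma word_eval_append: "word_eval (v @ w) = sl2z_mult (word_eval v) (word_eval w)"
  by (induction v) (auto simp: sl2z_mult_assoc)

lemma word_eval_SSSS: "word_eval [S, S, S, S] = sl2z_one"
  by (rule sl2z_eqI) (simp add: sl2z_mult.rep_eq sl2z_s.rep_eq sl2z_one.rep_eq)

lemma word_eval_USUSU: "word_eval [U, S, U, S, U] = word_eval [S]"
  by (rule sl2z_eqI) (simp add: sl2z_mult.rep_eq sl2z_s.rep_eq sl2z_one.rep_eq sl2z_u.rep_eq)

lemma sl2z_upow_word: "\<exists>w. word_eval w = sl2z_upow k"
proof -
  have pos: "word_eval (replicate n U) = sl2z_upow (int n)" for n
  proof (induction n)
    case (Suc n)
    then show ?case by (simp add: sl2z_u_eq_upow sl2z_mult_upow add.commute)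
  qed (simp add: sl2z_upow_0)
  have u_inverse: "word_eval [S, U, S, U, S, S, S] = sl2z_upow (-1)"
    by (rule sl2z_eqI) (simp add: sl2z_mult.rep_eq sl2z_s.rep_eq sl2z_u.rep_eq sl2z_one.rep_eq sl2z_upow.rep_eq)
  have neg: "word_eval (concat (replicate n [S, U, S, U, S, S, S])) = sl2z_upow (- int n)" for n
  proof (induction n)
    case (Suc n)
    then show ?case
      by (simp only: replicate_Suc concat.simps word_eval_append u_inverse sl2z_mult_upow) simp
  qed (simp add: sl2z_upow_0)
  show ?thesis
  proof (cases "k \<ge> 0")
    case True
    then show ?thesis using pos[of "nat k"] by auto
  next
    case False
    then show ?thesis using neg[of "nat (- k)"] by auto
  qed
qed

lemma sl2z_entries_mult_upow_s:
  assumes "sl2z_entries g = (a, b, c, d)"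
  shows "sl2z_entries (sl2z_mult (sl2z_mult g (sl2z_upow k)) sl2z_s) = (a * k + b, - a, c * k + d, - c)"
  using assms by transfer auto

lemma sl2z_mult_upow_s_cancel:
  "sl2z_mult (sl2z_mult (sl2z_mult g (sl2z_upow k)) sl2z_s) (sl2z_mult (word_eval [S, S, S]) (sl2z_upow (- k))) = g"
  unfolding word_eval.simps letter_eval.simps by transfer (auto simp: algebra_simps split: prod.splits)

text \<open>Induction on the absolute value of the lower left entry: right multiplication by
  \<open>u\<^sup>k s\<close> replaces it by the remainder of the lower right entry modulo it.\<close>

lemma sl2z_word_exists: "\<exists>w. word_eval w = g"
proof (induction "nat \<bar>fst (snd (snd (sl2z_entries g)))\<bar>" arbitrary: g rule: less_induct)
  case less
  obtain a b c d where g: "sl2z_entries g = (a, b, c, d)"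
    by (cases "sl2z_entries g") auto
  have det: "a * d - b * c = 1"
    using sl2z_entries[of g] g by simp
  show ?case
  proof (cases "c = 0")
    case True
    then have "a = 1 \<and> d = 1 \<or> a = -1 \<and> d = -1"
      using det by (simp add: zmult_eq_1_iff)
    then have "g = sl2z_upow b \<or> g = sl2z_mult (word_eval [S, S]) (sl2z_upow (- b))"
      by (auto intro!: sl2z_eqI simp: g True sl2z_upow.rep_eq sl2z_mult.rep_eq sl2z_s.rep_eq sl2z_one.rep_eq)
    then show ?thesis
      using sl2z_upow_word[of b] sl2z_upow_word[of "- b"] by (metis word_eval_append)
  next
    case False
    define k where "k = - (d div c)"
    define g' where "g' = sl2z_mult (sl2z_mult g (sl2z_upow k)) sl2z_s"
    have "fst (snd (snd (sl2z_entries g'))) = d mod c"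
      unfolding g'_def sl2z_entries_mult_upow_s[OF g] k_def
      by (simp add: minus_div_mult_eq_mod[symmetric] algebra_simps)
    then have "\<bar>fst (snd (snd (sl2z_entries g')))\<bar> < \<bar>c\<bar>"
      using abs_mod_less[OF False] by simp
    then obtain w' where w': "word_eval w' = g'"
      using less g by force
    obtain wk where wk: "word_eval wk = sl2z_upow (- k)"
      using sl2z_upow_word by blast
    have "word_eval (w' @ [S, S, S] @ wk) = sl2z_mult g' (sl2z_mult (word_eval [S, S, S]) (sl2z_upow (- k)))"
      by (simp only: word_eval_append w' wk)
    also have "\<dots> = g"
      unfolding g'_def by (rule sl2z_mult_upow_s_cancel)
    finally show ?thesis by blast
  qed
qed

abbreviation gr_of :: "sl2z \<Rightarrow> grz" where
  "gr_of g \<equiv> Poly_Mapping.single g 1"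

lemma gr_mult_eq_sum_supersets:
  assumes "finite A" "finite B" "Poly_Mapping.keys p \<subseteq> A" "Poly_Mapping.keys q \<subseteq> B"
  shows "gr_mult p q = (\<Sum>g\<in>A. \<Sum>h\<in>B.
      Poly_Mapping.single (sl2z_mult g h) (Poly_Mapping.lookup p g * Poly_Mapping.lookup q h))"
proof -
  have "gr_mult p q = (\<Sum>g\<in>A. \<Sum>h\<in>Poly_Mapping.keys q.
      Poly_Mapping.single (sl2z_mult g h) (Poly_Mapping.lookup p g * Poly_Mapping.lookup q h))"
    unfolding gr_mult_def by (rule sum.mono_neutral_left) (auto simp: assms in_keys_iff)
  also have "\<dots> = (\<Sum>g\<in>A. \<Sum>h\<in>B.
      Poly_Mapping.single (sl2z_mult g h) (Poly_Mapping.lookup p g * Poly_Mapping.lookup q h))"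
    by (intro sum.cong refl sum.mono_neutral_left) (auto simp: assms in_keys_iff)
  finally show ?thesis .
qed

lemma gr_mult_add_left: "gr_mult (p + q) r = gr_mult p r + gr_mult q r"
proof -
  let ?A = "Poly_Mapping.keys p \<union> Poly_Mapping.keys q"
  have "Poly_Mapping.keys (p + q) \<subseteq> ?A"
    by (rule keys_add)
  then show ?thesis
    by (simp add: gr_mult_eq_sum_supersets[of ?A "Poly_Mapping.keys r"] lookup_add distrib_right
        single_add sum.distrib)
qed

lemma gr_mult_add_right: "gr_mult r (p + q) = gr_mult r p + gr_mult r q"
proof -
  let ?A = "Poly_Mapping.keys p \<union> Poly_Mapping.keys q"
  have "Poly_Mapping.keys (p + q) \<subseteq> ?A"
    by (rule keys_add)
  then show ?thesis
    by (simp add: gr_mult_eq_sum_supersets[of "Poly_Mapping.keys r" ?A] lookup_add distrib_left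
        single_add sum.distrib)
qed

lemma gr_mult_zero_left [simp]: "gr_mult 0 q = 0"
  by (simp add: gr_mult_def)

lemma gr_mult_zero_right [simp]: "gr_mult q 0 = 0"
  by (simp add: gr_mult_def)

lemma gr_mult_neg_left: "gr_mult (- p) q = - gr_mult p q"
  using gr_mult_add_left[of "- p" p q] by (simp add: eq_neg_iff_add_eq_0)

lemma gr_mult_neg_right: "gr_mult q (- p) = - gr_mult q p"
  using gr_mult_add_right[of q "- p" p] by (simp add: eq_neg_iff_add_eq_0)

lemma gr_mult_diff_left: "gr_mult (p - q) r = gr_mult p r - gr_mult q r"
  using gr_mult_add_left[of p "- q" r] by (simp add: gr_mult_neg_left)

lemma gr_mult_diff_right: "gr_mult r (p - q) = gr_mult r p - gr_mult r q"
  using gr_mult_add_right[of r p "- q"] by (simp add: gr_mult_neg_right)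

lemma gr_mult_single:
  "gr_mult (Poly_Mapping.single g a) (Poly_Mapping.single h b) = Poly_Mapping.single (sl2z_mult g h) (a * b)"
  by (subst gr_mult_eq_sum_supersets[of "{g}" "{h}"]) auto

lemma gr_mult_sum_left: "finite A \<Longrightarrow> gr_mult (\<Sum>a\<in>A. f a) q = (\<Sum>a\<in>A. gr_mult (f a) q)"
  by (induction A rule: finite_induct) (auto simp: gr_mult_add_left)

lemma gr_mult_sum_right: "finite A \<Longrightarrow> gr_mult q (\<Sum>a\<in>A. f a) = (\<Sum>a\<in>A. gr_mult q (f a))"
  by (induction A rule: finite_induct) (auto simp: gr_mult_add_right)

lemma poly_mapping_sum_single:
  "x = (\<Sum>g\<in>Poly_Mapping.keys x. Poly_Mapping.single g (Poly_Mapping.lookup x g))"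
proof (rule poly_mapping_eqI)
  fix k
  have "Poly_Mapping.lookup (\<Sum>g\<in>Poly_Mapping.keys x. Poly_Mapping.single g (Poly_Mapping.lookup x g)) k
      = (\<Sum>g\<in>Poly_Mapping.keys x. if g = k then Poly_Mapping.lookup x g else 0)"
    by (simp add: lookup_sum lookup_single when_def)
  also have "\<dots> = Poly_Mapping.lookup x k"
    by (simp add: in_keys_iff)
  finally show "Poly_Mapping.lookup x k
      = Poly_Mapping.lookup (\<Sum>g\<in>Poly_Mapping.keys x. Poly_Mapping.single g (Poly_Mapping.lookup x g)) k"
    by simp
qed

lemma gen_ideal_diff: "x \<in> gen_ideal z \<Longrightarrow> y \<in> gen_ideal z \<Longrightarrow> x - y \<in> gen_ideal z"
  unfolding diff_conv_add_uminus by (intro gen_ideal.add gen_ideal.neg)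

lemma gen_ideal_subset: "y \<in> gen_ideal z \<Longrightarrow> gen_ideal y \<subseteq> gen_ideal z"
proof
  fix x
  assume "y \<in> gen_ideal z" and "x \<in> gen_ideal y"
  from this(2) show "x \<in> gen_ideal z"
    by (induction rule: gen_ideal.induct) (auto intro: gen_ideal.intros \<open>y \<in> gen_ideal z\<close>)
qed

lemma gr_pow_mem_gen_ideal: "n \<le> m \<Longrightarrow> gr_pow x m \<in> gen_ideal (gr_pow x n)"
proof (induction m)
  case (Suc m)
  then show ?case
    by (cases "n = Suc m") (auto intro: gen_ideal.gen gen_ideal.rmult)
qed (simp add: gen_ideal.gen)

lemma fg_quotient_mono: "fg_quotient I \<Longrightarrow> I \<subseteq> J \<Longrightarrow> fg_quotient J"
  unfolding fg_quotient_def by (meson subsetD)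

section \<open>Spanning the quotient by finitely many group elements\<close>

definition span_mod :: "grz \<Rightarrow> sl2z set \<Rightarrow> grz set" where
  "span_mod z G = {x. \<exists>f. x - (\<Sum>g\<in>G. Poly_Mapping.single g (f g)) \<in> gen_ideal z}"

context
  fixes z :: grz and G :: "sl2z set"
  assumes finite_G: "finite G"
begin

lemma span_mod_if_mem_gen_ideal: "x \<in> gen_ideal z \<Longrightarrow> x \<in> span_mod z G"
  unfolding span_mod_def by (auto intro: exI[of _ "\<lambda>_. 0"])

lemma span_mod_add:
  assumes "x \<in> span_mod z G" and "y \<in> span_mod z G"
  shows "x + y \<in> span_mod z G"
proof -
  obtain f h where f: "x - (\<Sum>g\<in>G. Poly_Mapping.single g (f g)) \<in> gen_ideal z"
    and h: "y - (\<Sum>g\<in>G. Poly_Mapping.single g (h g)) \<in> gen_ideal z"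
    using assms unfolding span_mod_def by blast
  have "x + y - (\<Sum>g\<in>G. Poly_Mapping.single g (f g + h g))
      = (x - (\<Sum>g\<in>G. Poly_Mapping.single g (f g))) + (y - (\<Sum>g\<in>G. Poly_Mapping.single g (h g)))"
    by (simp add: single_add sum.distrib)
  also have "\<dots> \<in> gen_ideal z"
    using f h by (rule gen_ideal.add)
  finally show ?thesis
    unfolding span_mod_def by (auto intro!: exI[of _ "\<lambda>g. f g + h g"])
qed

lemma span_mod_cong: "x - y \<in> gen_ideal z \<Longrightarrow> y \<in> span_mod z G \<Longrightarrow> x \<in> span_mod z G"
  using span_mod_add[OF span_mod_if_mem_gen_ideal] by fastforce

lemma span_mod_sum:
  "finite A \<Longrightarrow> (\<And>a. a \<in> A \<Longrightarrow> f a \<in> span_mod z G) \<Longrightarrow> (\<Sum>a\<in>A. f a) \<in> span_mod z G"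
  by (induction A rule: finite_induct) (auto intro: span_mod_add span_mod_if_mem_gen_ideal gen_ideal.zero)

lemma span_mod_sum_list: "(\<And>x. x \<in> set xs \<Longrightarrow> x \<in> span_mod z G) \<Longrightarrow> sum_list xs \<in> span_mod z G"
  by (induction xs) (auto intro: span_mod_add span_mod_if_mem_gen_ideal gen_ideal.zero)

lemma span_mod_single:
  assumes "g \<in> G"
  shows "Poly_Mapping.single g c \<in> span_mod z G"
proof -
  have "(\<Sum>h\<in>G. Poly_Mapping.single h (if h = g then c else 0)) = Poly_Mapping.single g c"
    using assms finite_G by (simp add: if_distrib[of "Poly_Mapping.single _"] cong: if_cong)
  then show ?thesis
    unfolding span_mod_def by (auto intro!: exI[of _ "\<lambda>h. if h = g then c else 0"] gen_ideal.zero)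
qed

lemma span_mod_single_scale:
  assumes "gr_of h \<in> span_mod z G"
  shows "Poly_Mapping.single h c \<in> span_mod z G"
proof -
  obtain f where f: "gr_of h - (\<Sum>g\<in>G. Poly_Mapping.single g (f g)) \<in> gen_ideal z"
    using assms unfolding span_mod_def by blast
  have "gr_mult (Poly_Mapping.single sl2z_one c) (gr_of h - (\<Sum>g\<in>G. Poly_Mapping.single g (f g)))
      = Poly_Mapping.single h c - (\<Sum>g\<in>G. Poly_Mapping.single g (c * f g))"
    by (simp add: gr_mult_diff_right gr_mult_sum_right[OF finite_G] gr_mult_single)
  moreover have "gr_mult (Poly_Mapping.single sl2z_one c) (gr_of h - (\<Sum>g\<in>G. Poly_Mapping.single g (f g)))
      \<in> gen_ideal z"
    using f by (rule gen_ideal.lmult)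
  ultimately show ?thesis
    unfolding span_mod_def by auto
qed

lemma span_mod_mult_right:
  assumes x: "x \<in> span_mod z G" and closed: "\<And>g. g \<in> G \<Longrightarrow> gr_of (sl2z_mult g t) \<in> span_mod z G"
  shows "gr_mult x (gr_of t) \<in> span_mod z G"
proof -
  obtain f where f: "x - (\<Sum>g\<in>G. Poly_Mapping.single g (f g)) \<in> gen_ideal z"
    using x unfolding span_mod_def by blast
  have "gr_mult (x - (\<Sum>g\<in>G. Poly_Mapping.single g (f g))) (gr_of t)
      = gr_mult x (gr_of t) - (\<Sum>g\<in>G. Poly_Mapping.single (sl2z_mult g t) (f g))"
    by (simp add: gr_mult_diff_left gr_mult_sum_left[OF finite_G] gr_mult_single)
  moreover have "gr_mult (x - (\<Sum>g\<in>G. Poly_Mapping.single g (f g))) (gr_of t) \<in> gen_ideal z"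
    using f by (rule gen_ideal.rmult)
  moreover have "(\<Sum>g\<in>G. Poly_Mapping.single (sl2z_mult g t) (f g)) \<in> span_mod z G"
    using finite_G by (rule span_mod_sum) (rule span_mod_single_scale[OF closed])
  ultimately show ?thesis
    by (metis span_mod_cong)
qed

lemma fg_quotient_if_span_mod:
  assumes all: "\<And>g. gr_of g \<in> span_mod z G"
  shows "fg_quotient (gen_ideal z)"
proof -
  have inj: "inj_on gr_of G"
    by (rule inj_onI) (metis lookup_single_eq lookup_single_not_eq zero_neq_one)
  show ?thesis
    unfolding fg_quotient_def
  proof (intro exI[of _ "gr_of ` G"] conjI allI)
    show "finite (gr_of ` G)"
      using finite_G by simp
    fix x
    have "(\<Sum>g\<in>Poly_Mapping.keys x. Poly_Mapping.single g (Poly_Mapping.lookup x g)) \<in> span_mod z G"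
      by (rule span_mod_sum) (simp_all add: span_mod_single_scale[OF all])
    then have "x \<in> span_mod z G"
      using poly_mapping_sum_single[of x] by metis
    then obtain f where f: "x - (\<Sum>g\<in>G. Poly_Mapping.single g (f g)) \<in> gen_ideal z"
      unfolding span_mod_def by blast
    have "(\<Sum>s\<in>gr_of ` G. gr_smult (f (inv_into G gr_of s)) s) = (\<Sum>g\<in>G. Poly_Mapping.single g (f g))"
      by (simp add: sum.reindex[OF inj] inv_into_f_f[OF inj] gr_smult_def)
    with f have "x - (\<Sum>s\<in>gr_of ` G. gr_smult (f (inv_into G gr_of s)) s) \<in> gen_ideal z"
      by (simp only:)
    then show "\<exists>c. x - (\<Sum>s\<in>gr_of ` G. gr_smult (c s) s) \<in> gen_ideal z"
      by (intro exI[of _ "\<lambda>s. f (inv_into G gr_of s)"]) simp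
  qed
qed

end

lemma fg_quotient_if_closed_under_letters:
  assumes "finite G" and "sl2z_one \<in> G"
    and closed: "\<And>g x. g \<in> G \<Longrightarrow> gr_of (sl2z_mult g (letter_eval x)) \<in> span_mod z G"
  shows "fg_quotient (gen_ideal z)"
proof (rule fg_quotient_if_span_mod[OF \<open>finite G\<close>])
  have "gr_of (word_eval w) \<in> span_mod z G" for w
  proof (induction w rule: rev_induct)
    case Nil
    show ?case
      using span_mod_single[OF \<open>finite G\<close> \<open>sl2z_one \<in> G\<close>] by simp
  next
    case (snoc x w)
    have "gr_mult (gr_of (word_eval w)) (gr_of (letter_eval x)) \<in> span_mod z G"
      using \<open>finite G\<close> snoc closed by (rule span_mod_mult_right)
    then show ?case
      by (simp add: word_eval_append gr_mult_single)
  qed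
  then show "gr_of g \<in> span_mod z G" for g
    using sl2z_word_exists[of g] by blast
qed

section \<open>Rewriting integer combinations of words\<close>

type_synonym lincomb = "(word \<times> int) list"

definition lincomb_eval :: "lincomb \<Rightarrow> grz" where
  "lincomb_eval p = (\<Sum>(w, c)\<leftarrow>p. Poly_Mapping.single (word_eval w) c)"

lemma lincomb_eval_Nil [simp]: "lincomb_eval [] = 0"
  by (simp add: lincomb_eval_def)

lemma lincomb_eval_Cons [simp]:
  "lincomb_eval ((w, c) # p) = Poly_Mapping.single (word_eval w) c + lincomb_eval p"
  by (simp add: lincomb_eval_def)

lemma lincomb_eval_append [simp]: "lincomb_eval (p @ q) = lincomb_eval p + lincomb_eval q"
  by (simp add: lincomb_eval_def)

datatype cmp = LT | EQ | GT

fun lex_cmp :: "word \<Rightarrow> word \<Rightarrow> cmp" where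
  "lex_cmp (x # v) (y # w) = (if x = y then lex_cmp v w else if x = U then GT else LT)"
| "lex_cmp _ _ = EQ"

definition deglex_cmp :: "word \<Rightarrow> word \<Rightarrow> cmp" where
  "deglex_cmp v w =
    (if length v < length w then LT else if length w < length v then GT else lex_cmp v w)"

lemma deglex_cmp_EQ: "deglex_cmp v w = EQ \<Longrightarrow> v = w"
proof -
  have "lex_cmp v w = EQ \<Longrightarrow> length v = length w \<Longrightarrow> v = w"
    by (induction v w rule: lex_cmp.induct) (auto split: if_splits)
  then show "deglex_cmp v w = EQ \<Longrightarrow> v = w"
    by (auto simp: deglex_cmp_def split: if_splits)
qed

text \<open>On lists sorted decreasingly by \<open>deglex_cmp\<close> this merge yields the sum in
  normal form, which is what makes the emptiness tests in the certificates below succeed.\<close>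

fun lincomb_add :: "lincomb \<Rightarrow> lincomb \<Rightarrow> lincomb" where
  "lincomb_add [] q = q"
| "lincomb_add p [] = p"
| "lincomb_add ((v, c) # p) ((w, d) # q) = (case deglex_cmp v w of
      EQ \<Rightarrow> if c + d = 0 then lincomb_add p q else (v, c + d) # lincomb_add p q
    | GT \<Rightarrow> (v, c) # lincomb_add p ((w, d) # q)
    | LT \<Rightarrow> (w, d) # lincomb_add ((v, c) # p) q)"

lemma lincomb_eval_add: "lincomb_eval (lincomb_add p q) = lincomb_eval p + lincomb_eval q"
proof (induction p q rule: lincomb_add.induct)
  case (3 v c p w d q)
  then show ?case
    by (cases "deglex_cmp v w")
      (auto dest: deglex_cmp_EQ simp: single_add[symmetric] algebra_simps)
qed auto

definition lincomb_smult :: "int \<Rightarrow> lincomb \<Rightarrow> lincomb" where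
  "lincomb_smult m p = map (\<lambda>(w, d). (w, m * d)) p"

lemma lincomb_smult_1 [simp]: "lincomb_smult 1 p = p"
  by (induction p) (auto simp: lincomb_smult_def)

lemma lincomb_eval_neg: "lincomb_eval (lincomb_smult (-1) p) = - lincomb_eval p"
  by (induction p) (auto simp: lincomb_smult_def single_uminus)

definition lincomb_mult :: "lincomb \<Rightarrow> lincomb \<Rightarrow> lincomb" where
  "lincomb_mult p q = concat (map (\<lambda>(v, c). map (\<lambda>(w, d). (v @ w, c * d)) q) p)"

lemma lincomb_eval_mult: "lincomb_eval (lincomb_mult p q) = gr_mult (lincomb_eval p) (lincomb_eval q)"
proof (induction p)
  case (Cons a p)
  obtain v c where a: "a = (v, c)"
    by (cases a)
  have "gr_mult (Poly_Mapping.single (word_eval v) c) (lincomb_eval q)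
      = lincomb_eval (map (\<lambda>(w, d). (v @ w, c * d)) q)" for q
    by (induction q) (auto simp: gr_mult_add_right gr_mult_single word_eval_append)
  then show ?case
    using Cons by (simp add: a lincomb_mult_def gr_mult_add_left)
qed (simp add: lincomb_mult_def)

definition lincomb_normalize :: "lincomb \<Rightarrow> lincomb" where
  "lincomb_normalize p = List.foldr (\<lambda>t. lincomb_add [t]) p []"

lemma lincomb_eval_eq_if_normalize:
  assumes "lincomb_add (lincomb_normalize p) (lincomb_smult (-1) (lincomb_normalize q)) = []"
  shows "lincomb_eval p = lincomb_eval q"
proof -
  have "lincomb_eval (lincomb_normalize p) = lincomb_eval p" for p
    by (induction p) (auto simp: lincomb_normalize_def lincomb_eval_add)
  then show ?thesis
    using arg_cong[OF assms, of lincomb_eval] by (simp add: lincomb_eval_add lincomb_eval_neg)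
qed

primrec lincomb_pow :: "lincomb \<Rightarrow> nat \<Rightarrow> lincomb" where
  "lincomb_pow p 0 = [([], 1)]"
| "lincomb_pow p (Suc n) = lincomb_mult (lincomb_pow p n) p"

lemma lincomb_eval_pow: "lincomb_eval (lincomb_pow p n) = gr_pow (lincomb_eval p) n"
  by (induction n) (simp_all add: gr_one_def lincomb_eval_mult)

type_synonym rule = "word \<times> lincomb"

definition rule_holds :: "grz \<Rightarrow> rule \<Rightarrow> bool" where
  "rule_holds z \<rho> \<longleftrightarrow> gr_of (word_eval (fst \<rho>)) - lincomb_eval (snd \<rho>) \<in> gen_ideal z"

lemma rule_holds_if_word_eval_eq: "word_eval v = word_eval w \<Longrightarrow> rule_holds z (v, [(w, 1)])"
  by (simp add: rule_holds_def gen_ideal.zero)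

lemma rule_holds_if_eq_generator:
  "lincomb_eval ((fst \<rho>, 1) # lincomb_smult (-1) (snd \<rho>)) = z \<Longrightarrow> rule_holds z \<rho>"
  by (auto simp: rule_holds_def lincomb_eval_neg gen_ideal.gen)

text \<open>The instruction \<open>(i, r, k)\<close> rewrites the word of the \<open>i\<close>-th term with the rule
  \<open>rs ! r\<close>, whose left-hand side must occur at position \<open>k\<close>; invalid instructions leave
  the combination unchanged.\<close>

definition rewrite_at :: "rule list \<Rightarrow> lincomb \<Rightarrow> nat \<times> nat \<times> nat \<Rightarrow> lincomb" where
  "rewrite_at rs p = (\<lambda>(i, r, k).
    if i < length p \<and> r < length rs then
      (case (p ! i, rs ! r) of ((w, c), (l, rhs)) \<Rightarrow>
        if take (length l) (drop k w) = l
        then lincomb_add (lincomb_mult (lincomb_mult [(take k w, c)] rhs) [(drop (k + length l) w, 1)])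
          (take i p @ drop (Suc i) p)
        else p)
    else p)"

lemma rewrite_at_sound:
  assumes rules: "\<forall>\<rho>\<in>set rs. rule_holds z \<rho>"
  shows "lincomb_eval p - lincomb_eval (rewrite_at rs p (i, r, k)) \<in> gen_ideal z"
proof (cases "i < length p \<and> r < length rs")
  case True
  obtain w c where term_i: "p ! i = (w, c)"
    by (cases "p ! i")
  obtain l rhs where rule_r: "rs ! r = (l, rhs)"
    by (cases "rs ! r")
  show ?thesis
  proof (cases "take (length l) (drop k w) = l")
    case match: True
    let ?a = "take k w" and ?b = "drop (k + length l) w"
    have w: "w = ?a @ l @ ?b"
      using match by (metis append_take_drop_id drop_drop add.commute)
    have "gr_of (word_eval l) - lincomb_eval rhs \<in> gen_ideal z"
      using rules True rule_r nth_mem unfolding rule_holds_def by fastforce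
    then have "gr_mult (gr_mult (Poly_Mapping.single (word_eval ?a) c)
        (gr_of (word_eval l) - lincomb_eval rhs)) (gr_of (word_eval ?b)) \<in> gen_ideal z"
      by (intro gen_ideal.lmult gen_ideal.rmult)
    moreover have "lincomb_eval p = lincomb_eval (take i p) + Poly_Mapping.single (word_eval w) c
        + lincomb_eval (drop (Suc i) p)"
      using id_take_nth_drop[of i p] True term_i
      by (metis lincomb_eval_Cons lincomb_eval_append add.assoc append_Cons append_Nil)
    moreover have "Poly_Mapping.single (word_eval w) c
        = gr_mult (gr_mult (Poly_Mapping.single (word_eval ?a) c) (gr_of (word_eval l))) (gr_of (word_eval ?b))"
      by (subst w) (simp add: gr_mult_single word_eval_append sl2z_mult_assoc)
    ultimately show ?thesis
      using True match
      by (simp add: rewrite_at_def term_i rule_r lincomb_eval_add lincomb_eval_mult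
          gr_mult_diff_left gr_mult_diff_right)
  qed (simp add: rewrite_at_def True term_i rule_r gen_ideal.zero)
qed (auto simp: rewrite_at_def gen_ideal.zero)

lemma rewrite_steps_sound:
  assumes "\<forall>\<rho>\<in>set rs. rule_holds z \<rho>"
  shows "lincomb_eval p - lincomb_eval (foldl (rewrite_at rs) p steps) \<in> gen_ideal z"
proof (induction steps arbitrary: p)
  case Nil
  then show ?case
    by (simp add: gen_ideal.zero)
next
  case (Cons t steps)
  obtain i r k where t: "t = (i, r, k)"
    by (cases t)
  have "lincomb_eval p - lincomb_eval (foldl (rewrite_at rs) p (t # steps))
      = (lincomb_eval p - lincomb_eval (rewrite_at rs p t))
        + (lincomb_eval (rewrite_at rs p t) - lincomb_eval (foldl (rewrite_at rs) (rewrite_at rs p t) steps))"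
    by simp
  also have "\<dots> \<in> gen_ideal z"
    unfolding t by (intro gen_ideal.add rewrite_at_sound[OF assms] Cons)
  finally show ?case .
qed

section \<open>Certificates\<close>

text \<open>A critical pair certificate \<open>(w, a, ka, b, kb, m, steps)\<close> for a rule: the word \<open>w\<close> is
  rewritten once with rule \<open>a\<close> at position \<open>ka\<close> and once with rule \<open>b\<close> at position
  \<open>kb\<close>, the difference is reduced along \<open>steps\<close>, and the result must be \<open>- m\<close> times the
  difference of the two sides of the rule.\<close>

type_synonym cp_cert = "word \<times> nat \<times> nat \<times> nat \<times> nat \<times> int \<times> (nat \<times> nat \<times> nat) list"

definition critical_pair_ok :: "rule list \<Rightarrow> rule \<Rightarrow> cp_cert \<Rightarrow> bool" where
  "critical_pair_ok rs \<rho> = (\<lambda>(w, a, ka, b, kb, m, steps). (m = 1 \<or> m = -1) \<and>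
    lincomb_add
      (foldl (rewrite_at rs)
        (lincomb_add (rewrite_at rs [(w, 1)] (0, a, ka))
          (lincomb_smult (-1) (rewrite_at rs [(w, 1)] (0, b, kb)))) steps)
      (lincomb_smult m ((fst \<rho>, 1) # lincomb_smult (-1) (snd \<rho>))) = [])"

lemma rule_holds_if_critical_pair_ok:
  assumes rules: "\<forall>\<rho>'\<in>set rs. rule_holds z \<rho>'" and ok: "critical_pair_ok rs \<rho> cert"
  shows "rule_holds z \<rho>"
proof -
  obtain w a ka b kb m steps where cert: "cert = (w, a, ka, b, kb, m, steps)"
    by (cases cert)
  let ?A = "rewrite_at rs [(w, 1)] (0, a, ka)" and ?B = "rewrite_at rs [(w, 1)] (0, b, kb)"
  let ?p = "lincomb_add ?A (lincomb_smult (-1) ?B)"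
  let ?q = "foldl (rewrite_at rs) ?p steps"
  let ?d = "gr_of (word_eval (fst \<rho>)) - lincomb_eval (snd \<rho>)"
  have m: "m = 1 \<or> m = -1"
    and q: "lincomb_add ?q (lincomb_smult m ((fst \<rho>, 1) # lincomb_smult (-1) (snd \<rho>))) = []"
    using ok by (simp_all add: critical_pair_ok_def cert)
  have "lincomb_eval [(w, 1)] - lincomb_eval ?B - (lincomb_eval [(w, 1)] - lincomb_eval ?A) \<in> gen_ideal z"
    using rules by (intro gen_ideal_diff rewrite_at_sound)
  then have "lincomb_eval ?p \<in> gen_ideal z"
    by (simp add: lincomb_eval_add lincomb_eval_neg algebra_simps)
  from this rewrite_steps_sound[OF rules, of ?p steps]
  have "lincomb_eval ?p - (lincomb_eval ?p - lincomb_eval ?q) \<in> gen_ideal z"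
    by (rule gen_ideal_diff)
  then have "lincomb_eval ?q \<in> gen_ideal z"
    by simp
  moreover have "lincomb_eval ?q + lincomb_eval (lincomb_smult m ((fst \<rho>, 1) # lincomb_smult (-1) (snd \<rho>))) = 0"
    using arg_cong[OF q, of lincomb_eval] by (simp add: lincomb_eval_add)
  with m have "?d = - lincomb_eval ?q \<or> ?d = lincomb_eval ?q"
    by (auto simp: lincomb_eval_neg add_eq_0_iff) (metis minus_diff_eq minus_minus)
  ultimately show ?thesis
    unfolding rule_holds_def by (auto intro: gen_ideal.neg)
qed

definition rules_certified :: "rule list \<Rightarrow> nat \<Rightarrow> cp_cert list \<Rightarrow> bool" where
  "rules_certified rs k certs \<longleftrightarrow> length rs = k + length certs \<and>
    list_all (\<lambda>i. critical_pair_ok (take (k + i) rs) (rs ! (k + i)) (certs ! i)) [0..<length certs]"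

lemma rules_hold_if_certified:
  assumes certified: "rules_certified rs k certs" and base: "\<forall>\<rho>\<in>set (take k rs). rule_holds z \<rho>"
  shows "\<forall>\<rho>\<in>set rs. rule_holds z \<rho>"
proof -
  have "i \<le> length certs \<Longrightarrow> \<forall>\<rho>\<in>set (take (k + i) rs). rule_holds z \<rho>" for i
  proof (induction i)
    case (Suc i)
    then have "critical_pair_ok (take (k + i) rs) (rs ! (k + i)) (certs ! i)"
      using certified by (auto simp: rules_certified_def list_all_iff)
    with Suc have "rule_holds z (rs ! (k + i))"
      by (auto intro: rule_holds_if_critical_pair_ok)
    moreover have "take (k + Suc i) rs = take (k + i) rs @ [rs ! (k + i)]"
      using Suc.prems certified by (simp add: rules_certified_def take_Suc_conv_app_nth)
    ultimately show ?case
      using Suc by simp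
  qed (simp add: base)
  from this[of "length certs"] show ?thesis
    using certified by (simp add: rules_certified_def)
qed

text \<open>A normal form certificate \<open>(steps, nf)\<close> for \<open>w\<close> reduces \<open>w\<close> along \<open>steps\<close> to the
  combination \<open>\<Sum>(j, c)\<leftarrow>nf. c \<cdot> B ! j\<close> of basis words.\<close>

type_synonym nf_cert = "(nat \<times> nat \<times> nat) list \<times> (nat \<times> int) list"

definition reduces_into :: "rule list \<Rightarrow> word list \<Rightarrow> word \<Rightarrow> nf_cert \<Rightarrow> bool" where
  "reduces_into rs B w = (\<lambda>(steps, nf). list_all (\<lambda>(j, c). j < length B) nf \<and>
    lincomb_add (foldl (rewrite_at rs) [(w, 1)] steps)
      (lincomb_smult (-1) (map (\<lambda>(j, c). (B ! j, c)) nf)) = [])"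

lemma span_mod_if_reduces_into:
  assumes rules: "\<forall>\<rho>\<in>set rs. rule_holds z \<rho>" and reduces: "reduces_into rs B w cert"
  shows "gr_of (word_eval w) \<in> span_mod z (word_eval ` set B)"
proof -
  obtain steps nf where cert: "cert = (steps, nf)"
    by (cases cert)
  let ?q = "foldl (rewrite_at rs) [(w, 1)] steps"
  let ?n = "map (\<lambda>(j, c). (B ! j, c)) nf"
  have indices: "list_all (\<lambda>(j, c). j < length B) nf"
    and q: "lincomb_add ?q (lincomb_smult (-1) ?n) = []"
    using reduces by (simp_all add: reduces_into_def cert)
  have "lincomb_eval ?q = lincomb_eval ?n"
    using arg_cong[OF q, of lincomb_eval] by (simp add: lincomb_eval_add lincomb_eval_neg)
  then have "gr_of (word_eval w) - lincomb_eval ?n \<in> gen_ideal z"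
    using rewrite_steps_sound[OF rules, of "[(w, 1)]" steps] by simp
  moreover have "lincomb_eval ?n \<in> span_mod z (word_eval ` set B)"
    unfolding lincomb_eval_def
  proof (rule span_mod_sum_list)
    fix x
    assume "x \<in> set (map (\<lambda>(w, c). Poly_Mapping.single (word_eval w) c) ?n)"
    then obtain j c where "(j, c) \<in> set nf" and x: "x = Poly_Mapping.single (word_eval (B ! j)) c"
      by auto
    with indices have "word_eval (B ! j) \<in> word_eval ` set B"
      by (auto simp: list_all_iff)
    then show "x \<in> span_mod z (word_eval ` set B)"
      unfolding x by (auto intro: span_mod_single)
  qed simp
  ultimately show ?thesis
    by (auto intro: span_mod_cong)
qed

definition basis_closed :: "rule list \<Rightarrow> word list \<Rightarrow> (nf_cert \<times> nf_cert) list \<Rightarrow> bool" where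
  "basis_closed rs B certs \<longleftrightarrow> list_all2 (\<lambda>w (c\<^sub>S, c\<^sub>U).
    reduces_into rs B (w @ [S]) c\<^sub>S \<and> reduces_into rs B (w @ [U]) c\<^sub>U) B certs"

lemma fg_quotient_if_basis_closed:
  assumes rules: "\<forall>\<rho>\<in>set rs. rule_holds z \<rho>" and "[] \<in> set B" and closed: "basis_closed rs B certs"
  shows "fg_quotient (gen_ideal z)"
proof (rule fg_quotient_if_closed_under_letters)
  show "sl2z_one \<in> word_eval ` set B"
    using \<open>[] \<in> set B\<close> by force
  fix g x
  assume "g \<in> word_eval ` set B"
  then obtain j where j: "j < length B" and g: "g = word_eval (B ! j)"
    by (auto simp: in_set_conv_nth)
  with closed have "case certs ! j of (c\<^sub>S, c\<^sub>U) \<Rightarrow>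
      reduces_into rs B (B ! j @ [S]) c\<^sub>S \<and> reduces_into rs B (B ! j @ [U]) c\<^sub>U"
    by (simp add: basis_closed_def list_all2_conv_all_nth)
  then obtain c where "reduces_into rs B (B ! j @ [x]) c"
    by (cases "certs ! j"; cases x) auto
  from span_mod_if_reduces_into[OF rules this]
  show "gr_of (sl2z_mult g (letter_eval x)) \<in> span_mod z (word_eval ` set B)"
    by (simp add: g word_eval_append)
qed simp

section \<open>The certificate for \<open>(u - 1)\<^sup>5\<close>\<close>

text \<open>Rules 0--2 are \<open>s\<^sup>4 = 1\<close>, \<open>u s u s u = s\<close> and \<open>u\<^sup>5 = u\<^sup>5 - (u - 1)\<^sup>5\<close>; rule \<open>i \<ge> 3\<close> comes
  from the completion (for the degree lexicographic order with \<open>u > s\<close>) and is certified by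
  the \<open>(i - 3)\<close>-th critical pair certificate.\<close>

definition sl2z_rules :: "rule list" where
  "sl2z_rules = [
    ([S, S, S, S], [([], 1)]),
    ([U, S, U, S, U], [([S], 1)]),
    ([U, U, U, U, U], [([U, U, U, U], 5), ([U, U, U], -10), ([U, U], 10), ([U], -5), ([], 1)]),
    ([U, S, S], [([S, S, U], 1)]),
    ([S, U, U, U, U], [([U, S, U, S], 1), ([S, U, U, U], 5), ([S, U, U], -10), ([S, U], 10),
      ([S], -5)]),
    ([S, S, S, U, S, U, S], [([U, U, U, U], 1), ([U, U, U], -5), ([U, U], 10), ([U], -10),
      ([], 5)]),
    ([U, U, U, U, S], [([U, U, U, S], 5), ([S, U, S, U], 1), ([U, U, S], -10), ([U, S], 10),
      ([S], -5)]),
    ([U, S, U, U, S, U, S], [([U, S, U, S], 5), ([S, U, U, U], 1), ([S, U, U], -5), ([S, U], 10),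
      ([S], -10)]),
    ([S, S, U, S, U, U, S, U], [([S, U, U, U, S], 1), ([S, S, U, S, U], 5), ([S, U, U, S], -5),
      ([S, U, S], 10), ([S, S], -10)]),
    ([S, U, S, U, U, S, U], [([U, U, U, S], 1), ([S, U, S, U], 5), ([U, U, S], -5), ([U, S], 10),
      ([S], -10)]),
    ([S, S, U, U, S, U, U, S, U], [([U, S, U, U, U, S], 1), ([S, S, U, U, S, U], 5),
      ([U, S, U, U, S], -5), ([U, S, U, S], 10), ([S, S, U], -10)]),
    ([S, S, S, U, U, U, S], [([U, S, U, U, S, U], 1), ([S, S, S, U, U, S], 5),
      ([S, S, S, U, S], -10), ([U, S, U], -5), ([], 10)]),
    ([S, S, U, S, U, U, U, S], [([U, U, S, U, U, S, U], 1), ([S, S, U, S, U, U, S], 5),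
      ([S, S, U, S, U, S], -10), ([U, U, S, U], -5), ([U], 10)]),
    ([S, S, U, U, S, U, U, U, S], [([U, U, U, S, U, U, S, U], 1), ([S, S, U, U, S, U, U, S], 5),
      ([S, S, U, U, S, U, S], -10), ([U, U, U, S, U], -5), ([U, U], 10)]),
    ([U, S, U, U, S, U, U, S, U], [([U, S, U, U, S, U], 5), ([S, S, S, U, U, S], 1),
      ([S, S, S, U, S], -5), ([U, S, U], -10), ([], 10)]),
    ([S, U, S, U, U, U, S, U, S], [([U, U, U, S, U, U, U], 1), ([U, U, U, S, U, U], -5),
      ([U, U, S, U, U, U], -5), ([S, U, U, S, U, S], 5), ([S, U, S, U, U, S], 5),
      ([U, U, U, S, U], 10), ([U, U, S, U, U], 25), ([U, S, U, U, U], 10), ([U, U, U, S], -10),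
      ([U, U, S, U], -50), ([U, S, U, U], -50), ([S, U, U, U], -10), ([U, U, S], 50),
      ([U, S, U], 100), ([S, U, U], 50), ([S, U, S], -25), ([U, S], -100), ([S, U], -100),
      ([S], 100)]),
    ([U, U, S, U, U, S, U, U, S], [([S, U, U, U, S, U, U, U], 1), ([S, U, U, U, S, U, U], -5),
      ([S, U, U, S, U, U, U], -5), ([S, S, U, U, S, U, S], 5), ([S, S, U, S, U, U, S], 5),
      ([U, U, S, U, U, S], 5), ([S, U, U, U, S, U], 10), ([S, U, U, S, U, U], 25),
      ([S, U, S, U, U, U], 10), ([S, S, U, S, U, S], -25), ([S, S, S, U, U, U], -5),
      ([S, U, U, U, S], -10), ([S, U, U, S, U], -50), ([S, U, S, U, U], -50),
      ([S, S, U, U, U], -10), ([S, S, S, U, U], 25), ([S, U, U, S], 50), ([S, U, S, U], 100),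
      ([S, S, U, U], 50), ([S, S, U, S], -25), ([S, S, S, U], -50), ([U, U, S], -10),
      ([S, U, S], -100), ([S, S, U], -100), ([S, S, S], 50), ([S, S], 100), ([], 10)]),
    ([S, U, U, S, U, U, S, U, U], [([U, U, U, S, U, U, U, S], 1), ([U, U, U, S, U, U, S], -5),
      ([U, U, S, U, U, U, S], -5), ([S, S, S, U, U, S, U], 5), ([S, S, S, U, S, U, U], 5),
      ([U, U, U, S, U, S], 10), ([U, U, S, U, U, S], 25), ([U, S, U, U, U, S], 10),
      ([S, U, U, S, U, U], 5), ([S, S, U, U, U, S], -5), ([S, S, S, U, S, U], -25),
      ([U, U, S, U, S], -50), ([U, S, U, U, S], -50), ([S, U, U, U, S], -10),
      ([S, S, U, U, U], -10), ([S, S, U, U, S], 25), ([U, S, U, S], 100), ([S, U, U, S], 50),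
      ([S, S, U, U], 50), ([S, S, U, S], -50), ([S, S, S, U], -25), ([S, U, U], -10),
      ([S, U, S], -100), ([S, S, U], -100), ([S, S, S], 50), ([S, S], 100), ([], 10)]),
    ([S, U, U, U, S, U, U, U, S], [([S, U, U, U, S, U, U, S], 5), ([S, U, U, S, U, U, U, S], 5),
      ([U, S, U, U, U, S, U], 1), ([S, U, U, U, S, U, S], -10), ([S, U, U, S, U, U, S], -25),
      ([S, U, S, U, U, U, S], -10), ([S, U, U, S, U, S], 50), ([S, U, S, U, U, S], 50),
      ([S, S, U, U, U, S], 10), ([S, S, S, U, U, U], 10), ([S, U, S, U, S], -100),
      ([S, S, U, U, S], -50), ([S, S, S, U, U], -50), ([U, U, S, U], -5), ([U, S, U, U], -5),
      ([S, S, U, S], 100), ([S, S, S, U], 100), ([S, S, S], -100), ([U], 25)]),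
    ([S, S, U, U, U, S, U, U, S, U], [([U, U, S, U, U, U, S], 1), ([S, S, U, U, U, S, U], 5),
      ([U, U, S, U, U, S], -5), ([U, U, S, U, S], 10), ([S, S, U, U], -10)]),
    ([U, S, U, U, S, U, U, U, S, U], [([S, U, U, S, U, U, U, S], 1), ([U, S, U, U, U, S, U], 5),
      ([U, S, U, U, S, U, U], 5), ([S, U, U, S, U, U, S], -5), ([S, U, S, U, U, U, S], -5),
      ([S, U, U, S, U, S], 10), ([S, U, S, U, U, S], 25), ([S, S, U, U, U, S], 10),
      ([S, U, S, U, S], -50), ([S, S, U, U, S], -50), ([S, S, S, U, U], -10), ([U, U, S, U], -10),
      ([U, S, U, U], -25), ([S, S, U, S], 100), ([S, S, S, U], 50), ([S, S, S], -100), ([U], 50)]),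
    ([U, U, U, S, U, U, U, S, U, U], [([S, U, U, S, U, U, U, S, U, S], 1),
      ([U, U, U, S, U, U, U, S, U], 5), ([U, U, U, S, U, U, S, U, U], 5),
      ([U, U, S, U, U, U, S, U, U], 5), ([S, S, S, U, U, S, U, U, U], -5),
      ([U, U, U, S, U, U, U, S], -10), ([U, U, U, S, U, U, S, U], -25),
      ([U, U, S, U, U, U, S, U], -25), ([U, U, S, U, U, S, U, U], -25),
      ([U, S, U, U, U, S, U, U], -10), ([S, U, U, S, U, U, S, U], 10),
      ([S, S, U, U, U, S, U, U], 5), ([S, S, S, U, U, S, U, U], 25), ([S, S, S, U, U, S, U, S], -5),
      ([S, S, S, U, S, U, U, U], 25), ([U, U, U, S, U, U, S], 50), ([U, U, S, U, U, U, S], 50),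
      ([U, U, S, U, U, S, U], 125), ([U, S, U, U, U, S, U], 50), ([U, S, U, U, S, U, U], 50),
      ([S, U, U, U, S, U, U], 10), ([S, U, U, U, S, U, S], -5), ([S, U, U, S, U, U, S], -5),
      ([S, S, U, U, U, S, U], -25), ([S, S, U, U, S, U, U], -25), ([S, S, S, U, U, S, U], -50),
      ([S, S, S, U, S, U, U], -125), ([U, U, U, S, U, S], -100), ([U, U, S, U, U, S], -250),
      ([U, S, U, U, U, S], -100), ([U, S, U, U, S, U], -250), ([S, U, U, U, S, U], -50),
      ([S, U, U, S, U, U], -50), ([S, S, U, U, U, S], 50), ([S, S, U, U, S, U], 125),
      ([S, S, U, S, U, U], 50), ([S, S, S, U, U, U], 25), ([S, S, S, U, S, U], 200),
      ([U, U, S, U, S], 500), ([U, S, U, U, S], 500), ([S, U, U, U, S], 100),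
      ([S, U, U, S, U], 200), ([S, U, S, U, U], 100), ([S, U, S, U, S], -50),
      ([S, S, U, U, U], 100), ([S, S, U, U, S], -250), ([S, S, U, S, U], -250),
      ([S, S, S, U, U], -175), ([S, S, S, U, S], 25), ([U, U, S, U], -10), ([U, S, U, S], -990),
      ([S, U, U, S], -475), ([S, U, S, U], -500), ([S, S, U, U], -500), ([S, S, U, S], 500),
      ([S, S, S, U], 500), ([U, U, S], 50), ([U, S, U], 50), ([S, U, S], 1000), ([S, S, U], 950),
      ([S, S, S], -500), ([U, U], -10), ([U, S], -250), ([S, S], -740), ([U], 50), ([S], 450),
      ([], -100)]),
    ([U, S, U, U, U, S, U, U, S, U], [([S, U, U, U, S, U, U, S], 1), ([U, U, S, U, U, S, U], 5),
      ([U, S, U, U, U, S, U], 5), ([S, U, U, U, S, U, S], -5), ([S, U, U, S, U, U, S], -5),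
      ([S, U, U, S, U, S], 25), ([S, U, S, U, U, S], 10), ([S, S, S, U, U, U], 10),
      ([S, U, S, U, S], -50), ([S, S, U, U, S], -10), ([S, S, S, U, U], -50), ([U, U, S, U], -25),
      ([U, S, U, U], -10), ([S, S, U, S], 50), ([S, S, S, U], 100), ([S, S, S], -100), ([U], 50)])]"

definition sl2z_rule_certs :: "cp_cert list" where
  "sl2z_rule_certs = [
    ([U, S, U, S, U, S, U], 1, 0, 1, 2, 1, []),
    ([U, S, U, S, U, U, U, U, U], 1, 0, 2, 4, -1, [(0, 1, 0), (0, 1, 0), (0, 1, 0), (0, 1, 0)]),
    ([S, S, S, S, U, U, U, U], 0, 0, 4, 3, 1, [(1, 0, 0), (1, 0, 0), (1, 0, 0), (2, 0, 0)]),
    ([S, S, S, U, S, U, S, S], 5, 0, 3, 5, -1, [(0, 3, 3), (0, 0, 0)]),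
    ([U, S, U, S, U, U, U, U], 1, 0, 4, 3, 1, [(1, 1, 0), (1, 1, 0), (1, 1, 0)]),
    ([U, S, U, U, S, U, S, S], 7, 0, 3, 5, 1, [(0, 3, 3), (0, 3, 2), (0, 3, 0), (1, 3, 2),
      (1, 3, 0)]),
    ([U, U, U, U, S, U, S, U], 6, 0, 1, 3, -1, [(0, 1, 2), (1, 1, 1), (1, 1, 0)]),
    ([U, S, S, U, S, U, U, S, U], 3, 0, 8, 1, -1, [(2, 3, 0), (5, 3, 0)]),
    ([S, S, S, S, U, S, U, U, S, U], 0, 0, 8, 2, 1, [(1, 0, 0), (4, 0, 0)]),
    ([U, S, S, S, U, U, U, S], 3, 0, 11, 1, -1, [(2, 3, 0), (3, 3, 0)]),
    ([U, S, S, U, S, U, U, U, S], 3, 0, 12, 1, -1, [(2, 3, 0), (3, 3, 0)]),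
    ([S, S, S, U, U, U, S, U, S, U], 11, 0, 1, 5, -1, [(1, 1, 4), (1, 1, 3), (4, 0, 0)]),
    ([S, U, S, U, U, S, U, U, U, U], 9, 0, 4, 5, 1, [(1, 9, 0), (1, 9, 0), (2, 4, 2), (2, 9, 0)]),
    ([S, S, U, S, U, U, U, S, U, S], 12, 0, 15, 1, -1, [(1, 7, 2), (2, 1, 2), (22, 0, 0)]),
    ([S, U, S, U, U, U, S, U, S, S], 15, 0, 3, 7, 1, [(0, 3, 5), (0, 3, 4), (0, 3, 3), (0, 3, 1),
      (0, 12, 1), (1, 8, 1), (2, 1, 3), (4, 3, 4), (4, 3, 2), (4, 3, 4), (4, 3, 3), (4, 3, 1),
      (4, 3, 1), (12, 3, 2), (13, 3, 1), (14, 3, 0), (17, 3, 1), (18, 3, 0), (19, 3, 1), (22, 0, 0),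
      (22, 3, 0)]),
    ([S, S, U, U, S, U, U, S, U, U], 10, 0, 17, 1, 1, [(3, 0, 0), (3, 0, 0), (7, 11, 0), (7, 0, 0),
      (11, 1, 0), (14, 0, 0), (18, 0, 0)]),
    ([U, S, S, U, U, S, U, U, S, U], 3, 0, 10, 1, -1, [(2, 3, 0), (5, 3, 0)]),
    ([S, S, S, U, U, U, S, U, U, S, U], 11, 0, 19, 1, -1, [(1, 10, 1), (1, 8, 1), (2, 11, 0)]),
    ([S, U, U, S, U, U, S, U, U, U, U], 17, 0, 4, 6, -1, [(2, 17, 0), (5, 17, 0), (6, 4, 4),
      (8, 1, 2), (11, 4, 3), (17, 1, 2), (19, 1, 1), (24, 2, 2), (30, 1, 1), (32, 1, 0), (34, 4, 1),
      (41, 1, 0), (41, 4, 0)]),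
    ([U, S, S, S, U, U, S, U, U, U, S], 3, 0, 13, 2, 1, [(0, 8, 0), (1, 3, 0), (1, 8, 0), (1, 3, 0),
      (1, 7, 2), (2, 12, 0)])]"

definition basis_words :: "word list" where
  "basis_words = [[], [S], [U], [S, S], [S, U], [U, S], [U, U], [S, S, S], [S, S, U], [S, U, S],
    [S, U, U], [U, S, U], [U, U, S], [U, U, U], [S, S, S, U], [S, S, U, S], [S, S, U, U],
    [S, U, S, U], [S, U, U, S], [S, U, U, U], [U, S, U, S], [U, S, U, U], [U, U, S, U],
    [U, U, U, S], [U, U, U, U], [S, S, S, U, S], [S, S, S, U, U], [S, S, U, S, U], [S, S, U, U, S],
    [S, S, U, U, U], [S, U, S, U, S], [S, U, S, U, U], [S, U, U, S, U], [S, U, U, U, S],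
    [U, S, U, U, S], [U, S, U, U, U], [U, U, S, U, S], [U, U, S, U, U], [U, U, U, S, U],
    [S, S, S, U, S, U], [S, S, S, U, U, S], [S, S, S, U, U, U], [S, S, U, S, U, S],
    [S, S, U, S, U, U], [S, S, U, U, S, U], [S, S, U, U, U, S], [S, U, S, U, U, S],
    [S, U, S, U, U, U], [S, U, U, S, U, S], [S, U, U, S, U, U], [S, U, U, U, S, U],
    [U, S, U, U, S, U], [U, S, U, U, U, S], [U, U, S, U, U, S], [U, U, S, U, U, U],
    [U, U, U, S, U, S], [U, U, U, S, U, U], [S, S, S, U, S, U, U], [S, S, S, U, U, S, U],
    [S, S, U, S, U, U, S], [S, S, U, S, U, U, U], [S, S, U, U, S, U, S], [S, S, U, U, S, U, U],
    [S, S, U, U, U, S, U], [S, U, S, U, U, U, S], [S, U, U, S, U, U, S], [S, U, U, S, U, U, U],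
    [S, U, U, U, S, U, S], [S, U, U, U, S, U, U], [U, S, U, U, S, U, U], [U, S, U, U, U, S, U],
    [U, U, S, U, U, S, U], [U, U, S, U, U, U, S], [U, U, U, S, U, U, S], [U, U, U, S, U, U, U],
    [S, S, S, U, S, U, U, S], [S, S, S, U, S, U, U, U], [S, S, S, U, U, S, U, S],
    [S, S, S, U, U, S, U, U], [S, S, U, U, S, U, U, S], [S, S, U, U, S, U, U, U],
    [S, S, U, U, U, S, U, S], [S, S, U, U, U, S, U, U], [S, U, S, U, U, U, S, U],
    [S, U, U, S, U, U, S, U], [S, U, U, S, U, U, U, S], [S, U, U, U, S, U, U, S],
    [S, U, U, U, S, U, U, U], [U, S, U, U, S, U, U, S], [U, S, U, U, S, U, U, U],
    [U, S, U, U, U, S, U, S], [U, S, U, U, U, S, U, U], [U, U, S, U, U, S, U, U],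
    [U, U, S, U, U, U, S, U], [U, U, U, S, U, U, S, U], [U, U, U, S, U, U, U, S],
    [S, S, S, U, U, S, U, U, S], [S, S, S, U, U, S, U, U, U], [S, S, U, U, U, S, U, U, S],
    [S, S, U, U, U, S, U, U, U], [S, U, S, U, U, U, S, U, U], [S, U, U, S, U, U, U, S, U],
    [S, U, U, U, S, U, U, S, U], [U, S, U, U, S, U, U, U, S], [U, S, U, U, U, S, U, U, S],
    [U, S, U, U, U, S, U, U, U], [U, U, S, U, U, S, U, U, U], [U, U, S, U, U, U, S, U, S],
    [U, U, S, U, U, U, S, U, U], [U, U, U, S, U, U, S, U, U], [U, U, U, S, U, U, U, S, U],
    [S, U, S, U, U, U, S, U, U, S], [S, U, S, U, U, U, S, U, U, U], [S, U, U, S, U, U, U, S, U, S],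
    [S, U, U, S, U, U, U, S, U, U], [S, U, U, U, S, U, U, S, U, U], [U, U, S, U, U, S, U, U, U, S],
    [U, U, S, U, U, U, S, U, U, S], [U, U, S, U, U, U, S, U, U, U], [U, U, U, S, U, U, S, U, U, U],
    [U, U, U, S, U, U, U, S, U, S], [S, U, U, S, U, U, U, S, U, U, S],
    [S, U, U, S, U, U, U, S, U, U, U], [S, U, U, U, S, U, U, S, U, U, U],
    [U, U, U, S, U, U, S, U, U, U, S], [S, U, U, U, S, U, U, S, U, U, U, S]]"

definition basis_certs :: "(nf_cert \<times> nf_cert) list" where
  "basis_certs = [
    (([], [(1, 1)]), ([], [(2, 1)])),
    (([], [(3, 1)]), ([], [(4, 1)])),
    (([], [(5, 1)]), ([], [(6, 1)])),
    (([], [(7, 1)]), ([], [(8, 1)])),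
    (([], [(9, 1)]), ([], [(10, 1)])),
    (([(0, 3, 0)], [(8, 1)]), ([], [(11, 1)])),
    (([], [(12, 1)]), ([], [(13, 1)])),
    (([(0, 0, 0)], [(0, 1)]), ([], [(14, 1)])),
    (([], [(15, 1)]), ([], [(16, 1)])),
    (([(0, 3, 1)], [(14, 1)]), ([], [(17, 1)])),
    (([], [(18, 1)]), ([], [(19, 1)])),
    (([], [(20, 1)]), ([], [(21, 1)])),
    (([(0, 3, 1), (0, 3, 0)], [(16, 1)]), ([], [(22, 1)])),
    (([], [(23, 1)]), ([], [(24, 1)])),
    (([], [(25, 1)]), ([], [(26, 1)])),
    (([(0, 3, 2), (0, 0, 0)], [(2, 1)]), ([], [(27, 1)])),
    (([], [(28, 1)]), ([], [(29, 1)])),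
    (([], [(30, 1)]), ([], [(31, 1)])),
    (([(0, 3, 2), (0, 3, 1)], [(26, 1)]), ([], [(32, 1)])),
    (([], [(33, 1)]), ([(0, 4, 0)], [(20, 1), (19, 5), (10, -10), (4, 10), (1, -5)])),
    (([(0, 3, 2), (0, 3, 0)], [(27, 1)]), ([(0, 1, 0)], [(1, 1)])),
    (([], [(34, 1)]), ([], [(35, 1)])),
    (([], [(36, 1)]), ([], [(37, 1)])),
    (([(0, 3, 2), (0, 3, 1), (0, 3, 0)], [(29, 1)]), ([], [(38, 1)])),
    (([(0, 6, 0)], [(23, 5), (17, 1), (12, -10), (5, 10), (1, -5)]),
     ([(0, 2, 0)], [(24, 5), (13, -10), (6, 10), (2, -5), (0, 1)])),
    (([(0, 3, 3), (0, 0, 0)], [(4, 1)]), ([], [(39, 1)])),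
    (([], [(40, 1)]), ([], [(41, 1)])),
    (([], [(42, 1)]), ([], [(43, 1)])),
    (([(0, 3, 3), (0, 3, 2), (0, 0, 0)], [(6, 1)]), ([], [(44, 1)])),
    (([], [(45, 1)]), ([(0, 4, 1)], [(30, 1), (29, 5), (16, -10), (8, 10), (3, -5)])),
    (([(0, 3, 3), (0, 3, 1)], [(39, 1)]), ([(0, 1, 1)], [(3, 1)])),
    (([], [(46, 1)]), ([], [(47, 1)])),
    (([], [(48, 1)]), ([], [(49, 1)])),
    (([(0, 3, 3), (0, 3, 2), (0, 3, 1)], [(41, 1)]), ([], [(50, 1)])),
    (([(0, 3, 3), (0, 3, 2), (0, 3, 0)], [(43, 1)]), ([], [(51, 1)])),
    (([], [(52, 1)]), ([(0, 4, 1)], [(36, 1), (35, 5), (21, -10), (11, 10), (5, -5)])),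
    (([(0, 3, 3), (0, 3, 1), (0, 3, 0)], [(44, 1)]), ([(0, 1, 1)], [(5, 1)])),
    (([], [(53, 1)]), ([], [(54, 1)])),
    (([], [(55, 1)]), ([], [(56, 1)])),
    (([(0, 5, 0)], [(24, 1), (13, -5), (6, 10), (2, -10), (0, 5)]), ([], [(57, 1)])),
    (([(0, 3, 4), (0, 3, 3), (0, 0, 0)], [(10, 1)]), ([], [(58, 1)])),
    (([(0, 11, 0)], [(51, 1), (40, 5), (25, -10), (11, -5), (0, 10)]),
     ([(0, 4, 2)], [(42, 1), (41, 5), (26, -10), (14, 10), (7, -5)])),
    (([(0, 3, 4), (0, 3, 2), (0, 0, 0)], [(11, 1)]), ([(0, 1, 2)], [(7, 1)])),
    (([], [(59, 1)]), ([], [(60, 1)])),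
    (([], [(61, 1)]), ([], [(62, 1)])),
    (([(0, 3, 4), (0, 3, 3), (0, 3, 2), (0, 0, 0)], [(13, 1)]), ([], [(63, 1)])),
    (([(0, 3, 4), (0, 3, 3), (0, 3, 1)], [(57, 1)]),
     ([(0, 9, 0)], [(23, 1), (17, 5), (12, -5), (5, 10), (1, -10)])),
    (([], [(64, 1)]), ([(0, 4, 2)], [(48, 1), (47, 5), (31, -10), (17, 10), (9, -5)])),
    (([(0, 3, 4), (0, 3, 2), (0, 3, 1)], [(58, 1)]), ([(0, 1, 2)], [(9, 1)])),
    (([], [(65, 1)]), ([], [(66, 1)])),
    (([], [(67, 1)]), ([], [(68, 1)])),
    (([(0, 7, 0)], [(20, 5), (19, 1), (10, -5), (4, 10), (1, -10)]), ([], [(69, 1)])),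
    (([(0, 3, 4), (0, 3, 3), (0, 3, 2), (0, 3, 0)], [(60, 1)]), ([], [(70, 1)])),
    (([(0, 3, 4), (0, 3, 3), (0, 3, 1), (0, 3, 0)], [(62, 1)]), ([], [(71, 1)])),
    (([], [(72, 1)]), ([(0, 4, 2)], [(55, 1), (54, 5), (37, -10), (22, 10), (12, -5)])),
    (([(0, 3, 4), (0, 3, 2), (0, 3, 1), (0, 3, 0)], [(63, 1)]), ([(0, 1, 2)], [(12, 1)])),
    (([], [(73, 1)]), ([], [(74, 1)])),
    (([], [(75, 1)]), ([], [(76, 1)])),
    (([], [(77, 1)]), ([], [(78, 1)])),
    (([(0, 3, 5), (0, 3, 4), (0, 3, 2), (0, 0, 0)], [(21, 1)]),
     ([(0, 8, 0)], [(33, 1), (27, 5), (18, -5), (9, 10), (3, -10)])),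
    (([(0, 12, 0)], [(71, 1), (59, 5), (42, -10), (22, -5), (2, 10)]),
     ([(0, 4, 3)], [(61, 1), (60, 5), (43, -10), (27, 10), (15, -5)])),
    (([(0, 3, 5), (0, 3, 3), (0, 3, 2), (0, 0, 0)], [(22, 1)]), ([(0, 1, 3)], [(15, 1)])),
    (([], [(79, 1)]), ([], [(80, 1)])),
    (([], [(81, 1)]), ([], [(82, 1)])),
    (([(0, 3, 5), (0, 3, 4), (0, 3, 3), (0, 3, 1)], [(76, 1)]), ([], [(83, 1)])),
    (([(0, 3, 5), (0, 3, 4), (0, 3, 2), (0, 3, 1)], [(78, 1)]), ([], [(84, 1)])),
    (([], [(85, 1)]), ([(0, 4, 3)], [(67, 1), (66, 5), (49, -10), (32, 10), (18, -5)])),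
    (([(0, 3, 5), (0, 3, 3), (0, 3, 2), (0, 3, 1), (0, 11, 0)],
      [(69, 1), (58, 5), (39, -10), (21, -5), (2, 10)]),
     ([(0, 1, 3)], [(18, 1)])),
    (([], [(86, 1)]), ([], [(87, 1)])),
    (([], [(88, 1)]), ([], [(89, 1)])),
    (([], [(90, 1)]), ([], [(91, 1)])),
    (([(0, 7, 1)], [(36, 5), (35, 1), (21, -5), (11, 10), (5, -10)]), ([], [(92, 1)])),
    (([(0, 3, 5), (0, 3, 4), (0, 3, 3), (0, 3, 1), (0, 3, 0)], [(80, 1)]), ([], [(93, 1)])),
    (([(0, 3, 5), (0, 3, 4), (0, 3, 2), (0, 3, 1), (0, 3, 0)], [(82, 1)]), ([], [(94, 1)])),
    (([], [(95, 1)]),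
     ([(0, 4, 3), (0, 6, 0)],
      [(74, 5), (56, -10), (55, 5), (46, 1), (38, 10), (36, -10), (23, -5), (20, 10), (9, -5)])),
    (([(0, 3, 6), (0, 3, 5), (0, 3, 3), (0, 0, 0)], [(31, 1)]),
     ([(0, 8, 1)], [(45, 1), (39, 5), (28, -5), (15, 10), (7, -10)])),
    (([(0, 12, 1), (2, 5, 0)],
      [(84, 1), (75, 5), (32, -5), (24, -10), (13, 50), (6, -100), (4, 10), (2, 100), (0, -50)]),
     ([(0, 4, 4)], [(77, 1), (76, 5), (57, -10), (39, 10), (25, -5)])),
    (([(0, 3, 6), (0, 3, 4), (0, 3, 3), (0, 0, 0)], [(32, 1)]), ([(0, 1, 4)], [(25, 1)])),
    (([], [(96, 1)]), ([], [(97, 1)])),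
    (([(0, 3, 6), (0, 3, 5), (0, 3, 3), (0, 3, 2), (0, 0, 0)], [(37, 1)]),
     ([(0, 10, 0)], [(52, 1), (44, 5), (34, -5), (20, 10), (8, -10)])),
    (([(0, 13, 0)], [(94, 1), (79, 5), (61, -10), (38, -5), (6, 10)]),
     ([(0, 4, 4)], [(81, 1), (80, 5), (62, -10), (44, 10), (28, -5)])),
    (([(0, 3, 6), (0, 3, 4), (0, 3, 3), (0, 3, 2), (0, 0, 0)], [(38, 1)]),
     ([(0, 1, 4)], [(28, 1)])),
    (([], [(98, 1)]), ([], [(99, 1)])),
    (([(0, 15, 0)],
      [(74, 1), (56, -5), (54, -5), (48, 5), (46, 5), (38, 10), (37, 25), (35, 10), (23, -10),
       (22, -50), (21, -50), (19, -10), (12, 50), (11, 100), (10, 50), (9, -25), (5, -100),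
       (4, -100), (1, 100)]),
     ([], [(100, 1)])),
    (([(0, 7, 2)], [(48, 5), (47, 1), (31, -5), (17, 10), (9, -10)]),
     ([(0, 17, 0)],
      [(95, 1), (73, -5), (72, -5), (58, 5), (57, 5), (55, 10), (53, 25), (52, 10), (49, 5),
       (45, -5), (39, -25), (36, -50), (34, -50), (33, -10), (29, -10), (28, 25), (20, 100),
       (18, 50), (16, 50), (15, -50), (14, -25), (10, -10), (9, -100), (8, -100), (7, 50), (3, 100),
       (0, 10)])),
    (([(0, 3, 6), (0, 3, 5), (0, 3, 4), (0, 3, 2), (0, 3, 1)], [(97, 1)]), ([], [(101, 1)])),
    (([(0, 3, 6), (0, 3, 5), (0, 3, 3), (0, 3, 2), (0, 3, 1), (0, 11, 0)],
      [(89, 1), (78, 5), (57, -10), (35, -5), (6, 10)]),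
     ([], [(102, 1)])),
    (([(0, 18, 0)],
      [(86, 5), (85, 5), (70, 1), (67, -10), (65, -25), (64, -10), (48, 50), (46, 50), (45, 10),
       (41, 10), (30, -100), (28, -50), (26, -50), (22, -5), (21, -5), (15, 100), (14, 100),
       (7, -100), (2, 25)]),
     ([(0, 4, 4), (0, 4, 0), (1, 3, 2), (1, 3, 0)],
      [(87, 5), (68, -10), (67, 5), (59, 1), (50, 10), (48, -10), (33, -5), (30, 10), (15, -5)])),
    (([(0, 3, 6), (0, 3, 5), (0, 3, 3), (0, 3, 2), (0, 3, 0), (0, 8, 0)],
      [(50, 1), (43, 5), (32, -5), (17, 10), (8, -10)]),
     ([(0, 14, 0)], [(51, 5), (40, 1), (25, -5), (11, -10), (0, 10)])),
    (([], [(103, 1)]), ([(0, 4, 4)], [(90, 1), (89, 5), (69, -10), (51, 10), (34, -5)])),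
    (([(0, 3, 6), (0, 3, 4), (0, 3, 3), (0, 3, 2), (0, 3, 0), (0, 12, 0), (1, 8, 0), (1, 1, 2)],
      [(92, 1), (37, -5), (33, 5), (27, 25), (18, -25), (9, 50), (7, -10), (6, 10), (3, -50)]),
     ([(0, 1, 4)], [(34, 1)])),
    (([], [(104, 1)]), ([], [(105, 1)])),
    (([(0, 16, 0)],
      [(87, 1), (68, -5), (66, -5), (61, 5), (59, 5), (53, 5), (50, 10), (49, 25), (47, 10),
       (42, -25), (41, -5), (33, -10), (32, -50), (31, -50), (29, -10), (26, 25), (18, 50),
       (17, 100), (16, 50), (15, -25), (14, -50), (12, -10), (9, -100), (8, -100), (7, 50),
       (3, 100), (0, 10)]),
     ([], [(106, 1)])),
    (([], [(107, 1)]), ([], [(108, 1)])),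
    (([(0, 7, 2)], [(55, 5), (54, 1), (37, -5), (22, 10), (12, -10)]), ([], [(109, 1)])),
    (([(0, 3, 6), (0, 3, 5), (0, 3, 4), (0, 3, 2), (0, 3, 1), (0, 3, 0)], [(99, 1)]),
     ([], [(110, 1)])),
    (([(0, 3, 7), (0, 3, 6), (0, 3, 4), (0, 3, 3), (0, 0, 0)], [(49, 1)]),
     ([(0, 10, 1)], [(64, 1), (58, 5), (46, -5), (30, 10), (14, -10)])),
    (([(0, 13, 1)], [(102, 1), (96, 5), (77, -10), (50, -5), (10, 10)]),
     ([(0, 4, 5), (0, 11, 0), (5, 5, 0)],
      [(97, 5), (88, 1), (78, -10), (77, 5), (58, 10), (40, -5), (34, -5), (24, -10), (13, 50),
       (6, -100), (5, 10), (2, 100), (0, -50)])),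
    (([(0, 3, 7), (0, 3, 6), (0, 3, 4), (0, 3, 3), (0, 3, 2), (0, 0, 0)], [(56, 1)]),
     ([(0, 19, 0)], [(72, 1), (63, 5), (53, -5), (36, 10), (16, -10)])),
    (([(0, 18, 1), (1, 13, 0), (4, 12, 0), (5, 11, 0), (5, 0, 0), (6, 0, 0), (9, 0, 0), (10, 0, 0)],
      [(98, 5), (94, 5), (83, 1), (81, -10), (71, -10), (51, 10), (38, -25), (32, -5), (31, -5),
       (22, 50), (13, 10), (11, -50), (4, 25)]),
     ([(0, 4, 5), (0, 4, 1), (1, 3, 3), (1, 3, 1)],
      [(99, 5), (82, -10), (81, 5), (75, 1), (63, 10), (61, -10), (45, -5), (42, 10), (25, -5)])),
    (([], [(111, 1)]), ([], [(112, 1)])),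
    (([], [(113, 1)]), ([], [(114, 1)])),
    (([(0, 7, 3)], [(67, 5), (66, 1), (49, -5), (32, 10), (18, -10)]), ([], [(115, 1)])),
    (([(0, 3, 7), (0, 3, 6), (0, 3, 5), (0, 3, 3), (0, 3, 2), (0, 3, 0), (0, 8, 0)],
      [(68, 1), (60, 5), (49, -5), (31, 10), (16, -10)]),
     ([(0, 20, 0)],
      [(85, 1), (70, 5), (69, 5), (65, -5), (64, -5), (48, 10), (46, 25), (45, 10), (30, -50),
       (28, -50), (26, -10), (22, -10), (21, -25), (15, 100), (14, 50), (7, -100), (2, 50)])),
    (([(0, 3, 7), (0, 3, 6), (0, 3, 4), (0, 3, 3), (0, 3, 2), (0, 3, 0), (0, 12, 0), (1, 8, 0),
       (1, 1, 2)],
      [(106, 1), (54, -5), (50, 5), (43, 25), (32, -25), (17, 50), (14, -10), (13, 10), (8, -50)]),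
     ([(0, 22, 0)],
      [(86, 1), (71, 5), (70, 5), (67, -5), (65, -5), (48, 25), (46, 10), (41, 10), (30, -50),
       (28, -10), (26, -50), (22, -25), (21, -10), (15, 50), (14, 100), (7, -100), (2, 50)])),
    (([(0, 18, 1), (5, 1, 0), (5, 7, 0), (5, 1, 0), (5, 3, 0), (5, 3, 0), (5, 4, 1), (6, 1, 0),
       (6, 3, 0), (6, 3, 0), (6, 3, 3), (6, 3, 1), (10, 3, 0), (10, 3, 0), (12, 3, 0)],
      [(104, 5), (103, 5), (93, 1), (90, -10), (88, -25), (60, 10), (43, -50), (39, 10), (38, -5),
       (37, -5), (27, 100), (20, 250), (19, 50), (18, -10), (10, -250), (9, 50), (7, -50), (6, 25),
       (4, 500), (3, -100), (1, -500)]),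
     ([(0, 4, 5), (0, 4, 1), (1, 3, 3), (1, 3, 1), (3, 3, 0), (5, 7, 0), (6, 1, 0), (6, 3, 0)],
      [(105, 5), (91, -10), (90, 5), (79, 1), (70, 10), (52, -5), (28, -5), (20, -50), (19, -10),
       (10, 50), (4, -100), (3, 10), (1, 100)])),
    (([], [(116, 1)]), ([(0, 4, 5)], [(107, 1), (106, 5), (92, -10), (71, 10), (53, -5)])),
    (([(0, 3, 7), (0, 3, 5), (0, 3, 4), (0, 3, 3), (0, 3, 1), (0, 3, 0), (0, 13, 0), (1, 10, 0),
       (1, 1, 3)],
      [(109, 1), (56, -5), (52, 5), (44, 25), (34, -25), (20, 50), (15, -10), (13, 10), (8, -50)]),
     ([(0, 1, 5)], [(53, 1)])),
    (([], [(117, 1)]), ([], [(118, 1)])),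
    (([(0, 16, 1), (3, 3, 0), (3, 3, 0), (8, 1, 0), (8, 3, 0), (8, 3, 0), (12, 1, 0), (12, 3, 0),
       (12, 3, 0), (12, 4, 1), (14, 1, 0), (14, 3, 0), (14, 3, 0), (14, 3, 0), (19, 3, 0),
       (19, 3, 0), (20, 3, 0)],
      [(105, 1), (91, -5), (89, -5), (81, 5), (79, 5), (73, 5), (70, 10), (69, 25), (61, -25),
       (60, -5), (52, -10), (51, -50), (43, 25), (34, 50), (30, -10), (28, -25), (27, -50),
       (23, -10), (20, -100), (15, 50), (10, 10), (4, -50), (3, 50), (2, 10), (1, 100)]),
     ([], [(119, 1)])),
    (([], [(120, 1)]),
     ([(0, 21, 0)],
      [(113, 1), (110, 5), (109, 5), (108, 5), (97, -5), (95, -10), (94, -25), (93, -25), (92, -25),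
       (91, -10), (84, 10), (82, 5), (78, 25), (77, -5), (76, 25), (73, 50), (72, 50), (71, 125),
       (70, 50), (69, 50), (68, 10), (67, -5), (65, -5), (63, -25), (62, -25), (58, -50),
       (57, -125), (55, -100), (53, -250), (52, -100), (51, -250), (50, -50), (49, -50), (45, 50),
       (44, 125), (43, 50), (41, 25), (39, 200), (36, 500), (34, 500), (33, 100), (32, 200),
       (31, 100), (30, -50), (29, 100), (28, -250), (27, -250), (26, -175), (25, 25), (22, -10),
       (20, -990), (18, -475), (17, -500), (16, -500), (15, 500), (14, 500), (12, 50), (11, 50),
       (9, 1000), (8, 950), (7, -500), (6, -10), (5, -250), (3, -740), (2, 50), (1, 450),
       (0, -100)])),
    (([(0, 3, 8), (0, 3, 7), (0, 3, 5), (0, 3, 4), (0, 3, 3), (0, 3, 1), (0, 12, 1), (0, 17, 0),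
       (0, 8, 1), (1, 1, 3), (5, 1, 2), (7, 1, 1), (9, 4, 1), (9, 1, 0), (12, 0, 0)],
      [(110, 1), (94, -5), (93, -5), (78, 5), (76, 5), (71, 25), (70, 10), (51, -50), (50, -10),
       (32, 50), (30, -10), (26, -25), (17, -100), (12, 10), (5, -50), (3, 50), (1, 100)]),
     ([(0, 22, 1), (7, 0, 0), (9, 0, 0), (12, 0, 0), (12, 0, 0)],
      [(98, 1), (84, 5), (83, 5), (81, -5), (79, -5), (61, 25), (59, 10), (42, -50), (40, -10),
       (32, -25), (31, -10), (25, 50), (13, 10), (6, -50), (4, 50), (2, 100), (0, -100)])),
    (([(0, 18, 2), (1, 9, 0), (2, 15, 0), (2, 9, 0), (2, 1, 1), (2, 7, 1), (2, 1, 1), (2, 3, 1),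
       (2, 3, 1), (2, 4, 2), (6, 1, 1), (6, 3, 1), (6, 3, 1), (6, 3, 4), (6, 3, 2), (7, 0, 0),
       (15, 3, 1), (15, 3, 1), (22, 3, 1), (32, 0, 0)],
      [(111, 5), (101, 1), (76, 10), (74, -10), (73, 5), (64, 25), (57, -50), (56, 50), (55, -25),
       (54, 50), (53, -25), (50, -5), (49, -5), (48, -50), (46, -175), (39, 100), (38, -100),
       (37, -250), (36, 125), (35, -100), (34, 50), (30, 250), (29, 50), (28, -10), (23, 100),
       (22, 500), (21, 500), (20, -250), (19, 100), (18, -50), (16, -250), (15, 50), (12, -500),
       (11, -990), (10, -475), (9, 500), (8, 500), (7, -100), (5, 1000), (4, 1000), (3, -500),
       (1, -1000), (0, -50)]),
     ([(0, 4, 6), (0, 4, 2), (1, 3, 4), (1, 3, 2), (2, 15, 0), (2, 3, 1), (4, 7, 1), (6, 1, 1),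
       (10, 3, 1)],
      [(112, 5), (100, -10), (96, 1), (83, 10), (74, 5), (64, -5), (56, -25), (54, -25), (48, 25),
       (46, 25), (40, -5), (38, 50), (37, 125), (35, 50), (30, -50), (29, -10), (23, -50),
       (22, -250), (21, -250), (19, -50), (16, 50), (12, 250), (11, 500), (10, 250), (9, -125),
       (8, -100), (7, 10), (5, -500), (4, -500), (3, 100), (1, 500)])),
    (([(0, 3, 8), (0, 3, 6), (0, 3, 5), (0, 3, 4), (0, 3, 2), (0, 3, 1), (0, 13, 1), (1, 10, 1),
       (1, 1, 4)],
      [(115, 1), (68, -5), (64, 5), (58, 25), (46, -25), (30, 50), (25, -10), (19, 10), (14, -50)]),
     ([(0, 1, 6)], [(65, 1)])),
    (([], [(121, 1)]), ([], [(122, 1)])),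
    (([(0, 16, 2), (2, 9, 0), (2, 3, 1), (2, 3, 1), (2, 11, 0), (6, 9, 0), (6, 1, 1), (6, 3, 1),
       (6, 3, 1), (8, 9, 0), (8, 1, 1), (8, 3, 1), (8, 3, 1), (8, 4, 2), (9, 5, 0), (12, 1, 1),
       (12, 3, 1), (12, 3, 1), (12, 3, 1), (21, 3, 1), (21, 3, 1), (27, 3, 1)],
      [(112, 1), (100, -5), (96, 5), (88, 5), (86, 5), (83, 10), (76, -5), (64, -10), (57, 25),
       (56, -5), (47, -25), (46, 50), (42, -10), (40, -25), (39, -50), (38, 25), (37, 25),
       (34, -25), (33, -10), (31, 125), (30, -100), (25, 50), (24, -50), (23, -50), (22, -125),
       (21, -50), (17, -250), (16, 10), (13, 250), (12, 250), (11, 250), (10, 50), (8, -50),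
       (7, 50), (6, -500), (5, -450), (4, -240), (3, 100), (2, 500), (1, 500), (0, -250)]),
     ([], [(123, 1)])),
    (([(0, 3, 8), (0, 3, 7), (0, 3, 6), (0, 3, 4), (0, 3, 3), (0, 3, 1), (0, 3, 0), (0, 10, 0),
       (3, 1, 0)],
      [(91, 1), (80, 5), (69, -5), (29, -10), (4, 10)]),
     ([(0, 20, 1), (4, 1, 0), (4, 7, 0), (4, 1, 0), (4, 3, 0), (4, 4, 1), (4, 1, 0), (4, 3, 0),
       (4, 3, 0), (4, 3, 3), (4, 3, 1), (8, 3, 0), (8, 3, 0), (10, 3, 0)],
      [(103, 1), (93, 5), (92, 5), (88, -5), (43, -10), (39, 10), (38, -10), (37, -25), (27, 50),
       (20, 50), (19, 10), (18, -5), (10, -50), (9, 25), (7, -50), (6, 50), (4, 100), (3, -50),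
       (1, -100)])),
    (([(0, 3, 8), (0, 3, 7), (0, 3, 5), (0, 3, 4), (0, 3, 3), (0, 3, 1), (0, 3, 0), (0, 13, 0),
       (1, 10, 0), (1, 1, 3), (5, 1, 0)],
      [(119, 1), (74, -5), (70, 5), (62, 25), (51, -25), (27, -10), (24, 10), (16, -50), (1, 50)]),
     ([(0, 22, 1), (5, 7, 0), (5, 1, 0), (5, 3, 0), (6, 1, 0), (6, 3, 0), (6, 3, 0), (10, 3, 0),
       (10, 3, 0), (13, 3, 0)],
      [(104, 1), (94, 5), (93, 5), (90, -5), (88, -5), (60, 10), (45, -10), (43, -50), (38, -25),
       (37, -10), (28, 50), (27, 100), (20, 125), (19, 25), (15, -100), (10, -125), (9, 10),
       (6, 50), (4, 250), (3, -50), (1, -250)])),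
    (([(0, 18, 2), (4, 16, 0), (4, 1, 1), (4, 7, 1), (4, 1, 1), (4, 3, 1), (4, 3, 1), (4, 3, 0),
       (4, 3, 0), (5, 2, 2), (6, 1, 1), (6, 3, 1), (6, 3, 1), (6, 3, 0), (6, 3, 0), (11, 6, 0),
       (13, 3, 1), (13, 3, 1), (13, 3, 0), (13, 3, 0), (21, 3, 1), (23, 3, 0), (39, 3, 0)],
      [(117, 5), (116, 5), (110, 1), (107, -10), (87, -25), (80, 10), (68, 125), (66, 125),
       (62, -50), (61, -125), (59, -125), (56, -5), (53, -125), (50, -250), (49, -625), (47, -250),
       (44, 100), (42, 625), (41, 125), (38, -25), (36, 250), (35, 50), (34, -10), (33, 250),
       (32, 1250), (31, 1245), (29, 250), (26, -625), (22, 50), (21, -250), (20, 50), (18, -1250),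
       (17, -2500), (16, -1250), (15, 575), (14, 1250), (13, 25), (12, 250), (11, 450), (9, 2500),
       (8, 2400), (7, -1240), (5, -500), (4, 25), (3, -2500), (0, -250)]),
     ([(0, 4, 6), (0, 4, 2), (1, 3, 4), (1, 3, 2), (3, 3, 1), (3, 3, 0), (5, 7, 1), (6, 1, 1),
       (6, 3, 1), (6, 3, 0), (11, 3, 0)],
      [(118, 5), (108, -10), (107, 5), (98, 1), (93, 10), (72, -5), (45, -5), (36, -50), (35, -10),
       (21, 50), (11, -100), (8, 10), (5, 100)])),
    (([], [(124, 1)]), ([(0, 4, 6)], [(120, 1), (119, 5), (109, -10), (94, 10), (73, -5)])),
    (([(0, 3, 8), (0, 3, 6), (0, 3, 5), (0, 3, 4), (0, 3, 2), (0, 3, 1), (0, 3, 0), (0, 18, 1),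
       (0, 19, 0), (0, 13, 0), (2, 1, 4), (2, 12, 0), (3, 11, 0), (3, 0, 0), (6, 0, 0), (10, 0, 0),
       (13, 0, 0)],
      [(109, 5), (100, 1), (92, -10), (72, 5), (69, 10), (63, 25), (56, -25), (53, -25), (49, -5),
       (47, -5), (37, 50), (36, 50), (28, -10), (24, 10), (21, -50), (16, -50), (10, 25)]),
     ([(0, 1, 6)], [(73, 1)])),
    (([(0, 3, 9), (0, 3, 8), (0, 3, 6), (0, 3, 5), (0, 3, 4), (0, 3, 2), (0, 3, 1), (0, 13, 1),
       (1, 10, 1), (1, 1, 4), (4, 9, 0), (4, 1, 1), (5, 4, 0)],
      [(123, 1), (87, -5), (83, 5), (78, 25), (39, -10), (26, -50), (23, -25), (20, 10), (19, 50),
       (17, -125), (12, 125), (10, -100), (5, -250), (4, 100), (3, 50), (1, 200)]),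
     ([(0, 22, 2), (3, 15, 0), (3, 9, 0), (3, 7, 1), (3, 1, 1), (3, 3, 1), (5, 1, 1), (5, 3, 1),
       (5, 3, 1), (5, 11, 0), (14, 3, 1), (14, 3, 1), (20, 3, 1)],
      [(111, 1), (102, 5), (101, 5), (76, 10), (74, -5), (57, -50), (56, 25), (55, -5), (54, 25),
       (51, -10), (50, -25), (49, -10), (48, -25), (46, -50), (39, 100), (38, -50), (37, -125),
       (36, 25), (35, -50), (30, 125), (29, 25), (23, 50), (22, 250), (21, 250), (20, -50),
       (19, 50), (16, -125), (15, 10), (12, -250), (11, -450), (10, -200), (9, 175), (8, 250),
       (7, -50), (5, 500), (4, 500), (3, -250), (1, -500), (0, -100)])),
    (([(0, 18, 3), (1, 17, 0), (2, 18, 0), (3, 16, 1), (3, 1, 2), (3, 7, 2), (6, 7, 2), (6, 1, 2),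
       (6, 3, 2), (6, 3, 2), (6, 3, 1), (6, 3, 1), (7, 2, 3), (9, 12, 1), (9, 1, 2), (9, 7, 1),
       (11, 1, 3), (12, 1, 2), (12, 3, 2), (12, 3, 2), (13, 3, 1), (13, 3, 1), (19, 1, 1),
       (19, 7, 0), (19, 4, 0), (22, 1, 2), (22, 3, 2), (22, 3, 2), (22, 9, 0), (22, 3, 1),
       (22, 3, 1), (22, 4, 1), (26, 4, 2), (27, 5, 0), (27, 0, 0), (29, 1, 0), (29, 3, 2),
       (29, 3, 0), (31, 3, 2), (33, 1, 1), (33, 3, 3), (33, 3, 1), (33, 3, 1), (40, 0, 0),
       (51, 0, 0), (54, 3, 1), (56, 3, 0), (59, 3, 1), (62, 0, 0), (64, 3, 0)],
      [(121, 5), (120, 5), (113, -10), (107, -25), (102, 5), (101, 5), (99, -25), (97, 10),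
       (96, 25), (91, 1), (90, 50), (85, 25), (83, -10), (82, 125), (81, -25), (80, 125), (78, -50),
       (77, -125), (75, -125), (68, -5), (67, -50), (65, -125), (63, -240), (62, -625), (61, 125),
       (60, -250), (58, 100), (55, -125), (54, -25), (50, -25), (48, 500), (47, 50), (46, -10),
       (45, 250), (44, 1200), (43, 1245), (42, -240), (41, 250), (40, -125), (39, -50), (37, 120),
       (36, 625), (35, 120), (33, -50), (32, -75), (31, -250), (30, -450), (28, -1250), (27, -2400),
       (26, -1250), (25, 825), (24, 375), (23, 50), (22, -250), (21, -625), (20, -1250), (19, -225),
       (18, 240), (17, 700), (16, 50), (15, 2500), (14, 2400), (13, -1750), (11, 1250), (10, 1250),
       (9, -450), (8, -225), (7, -2300), (6, 3150), (5, -700), (4, -2250), (3, 400), (2, -2500),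
       (1, 1750), (0, 635)]),
     ([(0, 4, 7), (0, 4, 3), (1, 3, 5), (1, 3, 3), (3, 3, 2), (3, 3, 1), (3, 11, 0), (5, 7, 2),
       (7, 1, 2), (8, 3, 2), (8, 3, 1), (8, 11, 0), (16, 3, 1)],
      [(122, 5), (114, -10), (113, 5), (103, 1), (101, 10), (96, 5), (85, -5), (75, -10), (52, -5),
       (51, -5), (48, -50), (47, -10), (40, -25), (31, 50), (25, 50), (17, -100), (14, 10),
       (12, 10), (11, 25), (9, 100), (0, -50)])),
    (([], [(125, 1)]),
     ([(0, 4, 7), (0, 18, 0), (2, 7, 3), (5, 1, 3), (5, 7, 2), (5, 15, 0), (6, 1, 2), (6, 7, 1),
       (7, 4, 2), (10, 1, 1), (11, 3, 4), (11, 3, 2), (11, 0, 0), (24, 3, 2), (26, 3, 1),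
       (34, 3, 1), (36, 0, 0)],
      [(123, 5), (115, -10), (113, 5), (104, 1), (102, 10), (86, -5), (81, 10), (74, -10), (67, 25),
       (66, 5), (61, -50), (56, 50), (54, 50), (53, -5), (52, -5), (49, -25), (48, -175), (47, -25),
       (46, -50), (42, 100), (38, -100), (37, -250), (35, -100), (32, 50), (31, 125), (30, 250),
       (29, 50), (26, -10), (23, 100), (22, 500), (21, 500), (19, 100), (18, -50), (17, -250),
       (16, -250), (14, 50), (12, -475), (11, -990), (10, -500), (9, 500), (8, 500), (7, -100),
       (5, 1000), (4, 1000), (3, -500), (1, -1000), (0, -50)])),
    (([(0, 3, 9), (0, 3, 8), (0, 3, 7), (0, 3, 5), (0, 3, 4), (0, 3, 2), (0, 3, 1), (0, 3, 0),
       (0, 19, 0), (3, 1, 1), (3, 4, 1)],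
      [(108, 1), (99, 5), (92, -5), (30, -10), (29, -50), (16, 100), (11, 10), (8, -100), (3, 50)]),
     ([(0, 20, 2), (3, 16, 0), (3, 1, 1), (3, 7, 1), (3, 1, 1), (3, 3, 1), (3, 3, 0), (4, 2, 2),
       (4, 1, 1), (4, 3, 1), (4, 3, 1), (4, 3, 0), (4, 3, 0), (9, 6, 0), (11, 3, 1), (11, 3, 1),
       (11, 3, 0), (11, 3, 0), (19, 3, 1), (21, 3, 0), (36, 3, 0)],
      [(116, 1), (110, 5), (109, 5), (87, -5), (68, 25), (66, 25), (62, -10), (61, -25), (59, -25),
       (56, -25), (53, -25), (50, -50), (49, -125), (47, -50), (44, 50), (42, 125), (41, 25),
       (38, -50), (36, 50), (35, 10), (34, -5), (33, 50), (32, 250), (31, 240), (29, 50),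
       (26, -125), (22, 100), (21, -50), (20, 25), (18, -250), (17, -500), (16, -250), (15, 75),
       (14, 250), (13, 50), (12, 50), (9, 500), (8, 450), (7, -240), (5, -100), (4, 50), (3, -500),
       (0, -50)])),
    (([(0, 3, 10), (0, 3, 9), (0, 3, 8), (0, 3, 6), (0, 3, 5), (0, 3, 3), (0, 3, 2), (0, 3, 1),
       (0, 11, 0), (0, 20, 0), (0, 10, 1), (0, 8, 1), (1, 4, 4), (1, 17, 0), (5, 1, 2), (9, 4, 2),
       (13, 4, 1)],
      [(114, 1), (97, 25), (95, -5), (90, 5), (89, 25), (76, -50), (73, 25), (72, 25), (69, -50),
       (58, -25), (57, -25), (55, -50), (53, -125), (52, -50), (51, 50), (49, -25), (45, 25),
       (42, -10), (41, -50), (39, 125), (36, 225), (35, -125), (34, 225), (33, 50), (29, 50),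
       (28, -125), (26, 100), (21, 250), (20, -500), (18, -250), (17, 10), (16, -250), (15, 250),
       (14, 25), (13, 50), (11, -250), (10, 50), (9, 500), (8, 500), (7, -200), (5, 125), (3, -500),
       (0, -50)]),
     ([(0, 20, 3), (0, 17, 0), (1, 18, 0), (2, 16, 1), (2, 1, 2), (2, 7, 2), (5, 7, 2), (5, 1, 2),
       (5, 3, 2), (5, 3, 1), (6, 2, 3), (7, 12, 1), (7, 1, 2), (7, 7, 1), (9, 1, 3), (11, 1, 2),
       (11, 3, 2), (11, 3, 2), (12, 3, 1), (12, 3, 1), (18, 1, 1), (18, 7, 0), (18, 4, 0),
       (21, 1, 2), (21, 3, 2), (21, 3, 2), (21, 9, 0), (21, 3, 1), (21, 3, 1), (21, 4, 1),
       (24, 4, 2), (25, 5, 0), (25, 0, 0), (27, 1, 0), (27, 3, 2), (27, 3, 0), (29, 3, 2),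
       (31, 1, 1), (31, 3, 3), (31, 3, 1), (31, 3, 1), (36, 0, 0), (44, 0, 0), (47, 3, 1),
       (49, 3, 0), (50, 3, 1), (53, 0, 0), (56, 3, 0)],
      [(120, 1), (115, 5), (107, -5), (102, 25), (101, 25), (99, -5), (96, 5), (91, 5), (90, 10),
       (85, 5), (84, -120), (83, -50), (82, 25), (81, -5), (80, 25), (78, -10), (77, -25),
       (75, -25), (68, -25), (67, -10), (65, -25), (62, -125), (61, 25), (60, -50), (58, 50),
       (55, -25), (54, -5), (50, -50), (48, 100), (47, 10), (46, -5), (45, 50), (43, 240), (41, 50),
       (40, -25), (39, -10), (36, 125), (33, -10), (32, 75), (31, -50), (30, -75), (28, -250),
       (26, -250), (25, 125), (24, 75), (23, 250), (22, -50), (21, -125), (20, -250), (17, 1250),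
       (16, 10), (15, 500), (14, 450), (13, -350), (12, -1200), (11, 250), (10, 250), (9, 150),
       (7, -700), (6, 750), (5, 2260), (4, -450), (3, -400), (2, -500), (1, -2050), (0, 135)]))]"

lemma u_minus_one_pow_eq: "gr_pow (gr_u - gr_one) n = lincomb_eval (lincomb_pow [([U], 1), ([], -1)] n)"
  by (simp add: lincomb_eval_pow gr_u_def gr_one_def single_uminus)

lemma sl2z_rules_hold: "\<forall>\<rho>\<in>set sl2z_rules. rule_holds (gr_pow (gr_u - gr_one) 5) \<rho>"
proof (rule rules_hold_if_certified)
  show "rules_certified sl2z_rules 3 sl2z_rule_certs"
    by code_simp
  let ?z = "gr_pow (gr_u - gr_one) 5"
  have "word_eval [S, S, S, S] = word_eval []" and "word_eval [U, S, U, S, U] = word_eval [S]"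
    by (simp_all only: word_eval_SSSS word_eval_USUSU word_eval.simps(1))
  then have "rule_holds ?z ([S, S, S, S], [([], 1)])" and "rule_holds ?z ([U, S, U, S, U], [([S], 1)])"
    by (simp_all only: rule_holds_if_word_eval_eq)
  moreover have "rule_holds ?z (sl2z_rules ! 2)"
  proof (rule rule_holds_if_eq_generator)
    have "lincomb_add (lincomb_normalize ((fst (sl2z_rules ! 2), 1) # lincomb_smult (-1) (snd (sl2z_rules ! 2))))
        (lincomb_smult (-1) (lincomb_normalize (lincomb_pow [([U], 1), ([], -1)] 5))) = []"
      by code_simp
    then show "lincomb_eval ((fst (sl2z_rules ! 2), 1) # lincomb_smult (-1) (snd (sl2z_rules ! 2))) = ?z"
      unfolding u_minus_one_pow_eq by (rule lincomb_eval_eq_if_normalize)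
  qed
  moreover have "take 3 sl2z_rules = [([S, S, S, S], [([], 1)]), ([U, S, U, S, U], [([S], 1)]), sl2z_rules ! 2]"
    by (simp add: sl2z_rules_def)
  ultimately show "\<forall>\<rho>\<in>set (take 3 sl2z_rules). rule_holds ?z \<rho>"
    by simp
qed

lemma basis_closed_sl2z_rules: "basis_closed sl2z_rules basis_words basis_certs"
  by code_simp

theorem proposition1:
  fixes n :: nat
  assumes "1 \<le> n" and "n \<le> 5"
  shows "fg_quotient (gen_ideal (gr_pow (gr_u - gr_one) n))"
proof (rule fg_quotient_mono)
  have "[] \<in> set basis_words"
    by (simp add: basis_words_def)
  with sl2z_rules_hold show "fg_quotient (gen_ideal (gr_pow (gr_u - gr_one) 5))"
    using basis_closed_sl2z_rules by (rule fg_quotient_if_basis_closed)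
  show "gen_ideal (gr_pow (gr_u - gr_one) 5) \<subseteq> gen_ideal (gr_pow (gr_u - gr_one) n)"
    using \<open>n \<le> 5\<close> by (intro gen_ideal_subset gr_pow_mem_gen_ideal)
qed

end
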